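(* Let $f\in L^2(\overline{\mathcal H}^3)$ be complex valued, and let $f_\sharp(x,t)=\Big(\frac{|f(x,t)|^2+|f(-x,-t)|^2}{2}\Big)^{1/2}$. Then $\|f\bar\mu*f\bar\mu\|_{L^2(\mathbb R^4)}\le\|f_\sharp\bar\mu*f_\sharp\bar\mu\|_{L^2(\mathbb R^4)}$.
   Context: $\overline{\mathcal H}^3=\{(x,t)\in\mathbb R^3\times\mathbb R:t^2=|x|^2-1\}$ with measure $d\bar\mu=\delta(t^2-|x|^2+1)\,dx\,dt$, i.e. $\int g\,d\bar\mu=\sum_{\pm}\int_{|y|>1}g(y,\pm\sqrt{|y|^2-1})\frac{dy}{\sqrt{|y|^2-1}}$. For $f\in L^2(\overline{\mathcal H}^3)$, $f\bar\mu*f\bar\mu$ denotes the convolution of the measure $f\bar\mu$ with itself, which is absolutely continuous with respect to Lebesgue measure on $\mathbb R^4$ and identified with its density. *)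

theory Defs
  imports "HOL-Analysis.Analysis"
begin

type_synonym pt4 = "(real^3) \<times> real"

definition hyp_weight :: "(real^3) \<times> bool \<Rightarrow> ennreal" where
  "hyp_weight yb = (if norm (fst yb) > 1
      then ennreal (1 / sqrt ((norm (fst yb))\<^sup>2 - 1)) else 0)"

definition hyp_param :: "(real^3) \<times> bool \<Rightarrow> pt4" where
  "hyp_param yb = (fst yb,
      (if snd yb then 1 else -1) * sqrt ((norm (fst yb))\<^sup>2 - 1))"

text \<open>The measure mu-bar on the hyperboloid, as a measure on R^3 x R:
  the integral of g is the sum over both signs of
  the integral over |y|>1 of g(y, +-sqrt(|y|^2-1)) / sqrt(|y|^2-1) dy.\<close>
definition hyp_mu :: "pt4 measure" where
  "hyp_mu = distr (density (lborel \<Otimes>\<^sub>M count_space UNIV) hyp_weight) borel hyp_param"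

definition in_L2_hyp :: "(pt4 \<Rightarrow> complex) \<Rightarrow> bool" where
  "in_L2_hyp f \<longleftrightarrow> f \<in> borel_measurable hyp_mu \<and>
       integrable hyp_mu (\<lambda>p. (norm (f p))\<^sup>2)"

text \<open>g (a function on R^4 = R^3 x R) is a Lebesgue density of the convolution
  measure (f mu) * (f mu), tested against continuous compactly supported functions.\<close>
definition is_conv_density :: "(pt4 \<Rightarrow> complex) \<Rightarrow> (pt4 \<Rightarrow> complex) \<Rightarrow> bool" where
  "is_conv_density f g \<longleftrightarrow> g \<in> borel_measurable lborel \<and>
     (\<forall>\<phi> :: pt4 \<Rightarrow> real. continuous_on UNIV \<phi> \<and> bounded {z. \<phi> z \<noteq> 0} \<longrightarrow>
        integrable lborel (\<lambda>z. g z * complex_of_real (\<phi> z)) \<and>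
        integrable (hyp_mu \<Otimes>\<^sub>M hyp_mu)
          (\<lambda>pq. f (fst pq) * f (snd pq) * complex_of_real (\<phi> (fst pq + snd pq))) \<and>
        (LINT z|lborel. g z * complex_of_real (\<phi> z)) =
        integral\<^sup>L (hyp_mu \<Otimes>\<^sub>M hyp_mu)
           (\<lambda>pq. f (fst pq) * f (snd pq) * complex_of_real (\<phi> (fst pq + snd pq))))"

definition f_sharp :: "(pt4 \<Rightarrow> complex) \<Rightarrow> pt4 \<Rightarrow> complex" where
  "f_sharp f p = complex_of_real
     (sqrt (((norm (f p))\<^sup>2 + (norm (f (- p)))\<^sup>2) / 2))"

definition L2sq :: "(pt4 \<Rightarrow> complex) \<Rightarrow> ennreal" where
  "L2sq g = (\<integral>\<^sup>+ z. ennreal ((norm (g z))\<^sup>2) \<partial>lborel)"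

end

theory Submission
  imports Defs
begin

text \<open>Only the pairings of g and h with continuous compactly supported test functions are
  known, so g is first smoothed by a mollifier u. By definition of the convolution density,
  \<open>\<langle>g, u(\<cdot> - y)\<rangle> = \<integral>\<integral> f(p) f(q) u(p + q - y) d\<mu>(p) d\<mu>(q)\<close>; squaring and
  integrating over y bounds \<open>\<parallel>g \<star> u\<parallel>\<^sub>2\<^sup>2\<close> by a fourfold integral of
  \<open>|f(p\<^sub>1)| |f(p\<^sub>2)| |f(p\<^sub>3)| |f(p\<^sub>4)|\<close> against the autocorrelation of u at
  \<open>p\<^sub>1 + p\<^sub>2 - p\<^sub>3 - p\<^sub>4\<close>. Since \<open>\<mu>\<close> is invariant under \<open>p \<mapsto> -p\<close>, the factors
  \<open>|f(p\<^sub>2)|, |f(p\<^sub>4)|\<close> may be replaced by \<open>|f(-p\<^sub>2)|, |f(-p\<^sub>4)|\<close>. Symmetrising in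
  (p, q) and the pointwise Cauchy-Schwarz inequality
  \<open>|f(p)| |f(-q)| + |f(q)| |f(-p)| \<le> 2 f\<^sub>\<sharp>(p) f\<^sub>\<sharp>(q)\<close> then bound the pairing by the
  one for the nonnegative function \<open>f\<^sub>\<sharp>\<close>, which is at most \<open>\<langle>|h|, u(\<cdot> - y)\<rangle>\<close>, and
  Young's inequality gives \<open>\<parallel>g \<star> u\<parallel>\<^sub>2 \<le> \<parallel>h\<parallel>\<^sub>2\<close>. Letting u shrink to a point yields
  \<open>|\<langle>g, \<phi>\<rangle>| \<le> \<parallel>h\<parallel>\<^sub>2 \<parallel>\<phi>\<parallel>\<^sub>2\<close> for continuous compactly supported \<open>\<phi>\<close>, by density in
  \<open>L\<^sup>1\<close> also for bounded compactly supported \<open>\<phi>\<close>, and testing with \<open>\<phi> = cnj g \<cdot> 1\<^sub>E\<close>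
  for bounded sets E on which g is bounded gives \<open>\<parallel>g\<parallel>\<^sub>2 \<le> \<parallel>h\<parallel>\<^sub>2\<close>.\<close>

section \<open>Mollification on Euclidean space\<close>

lemma nn_integral_lborel_reflect:
  fixes G :: "'a::euclidean_space \<Rightarrow> ennreal"
  assumes [measurable]: "G \<in> borel_measurable borel"
  shows "(\<integral>\<^sup>+x. G (t - x) \<partial>lborel) = integral\<^sup>N lborel G"
proof -
  have "lborel = density (distr lborel borel (\<lambda>x. t + (-1::real) *\<^sub>R x)) (\<lambda>_. \<bar>-1::real\<bar> ^ DIM('a))"
    by (rule lborel_affine) simp
  then have "integral\<^sup>N lborel G
      = integral\<^sup>N (density (distr lborel borel (\<lambda>x. t + (-1::real) *\<^sub>R x)) (\<lambda>_. \<bar>-1::real\<bar> ^ DIM('a))) G"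
    by (rule arg_cong)
  also have "\<dots> = (\<integral>\<^sup>+x. G (t - x) \<partial>lborel)"
    by (simp add: nn_integral_density nn_integral_distr)
  finally show ?thesis ..
qed

lemma nn_integral_lborel_translate:
  fixes G :: "'a::euclidean_space \<Rightarrow> ennreal"
  assumes [measurable]: "G \<in> borel_measurable borel"
  shows "(\<integral>\<^sup>+x. G (x + t) \<partial>lborel) = integral\<^sup>N lborel G"
proof -
  have "integral\<^sup>N lborel G = integral\<^sup>N (distr lborel borel ((+) t)) G"
    by (simp add: lborel_distr_plus)
  also have "\<dots> = (\<integral>\<^sup>+x. G (x + t) \<partial>lborel)"
    by (simp add: nn_integral_distr add.commute)
  finally show ?thesis ..
qed

lemma cball_in_borel[measurable]: "cball (c::'a::metric_space) r \<in> sets borel"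
  by (simp add: borel_closed)

lemma emeasure_lborel_ball_pos:
  fixes c :: "'a::euclidean_space"
  assumes "0 < r"
  shows "0 < emeasure lborel (ball c r)"
  using content_ball_pos[OF assms, of c] emeasure_lborel_ball_finite[of c r]
  by (simp add: emeasure_eq_ennreal_measure)

definition continuous_compact_support :: "('a::metric_space \<Rightarrow> 'b::{topological_space,zero}) \<Rightarrow> bool" where
  "continuous_compact_support \<phi> \<longleftrightarrow> continuous_on UNIV \<phi> \<and> bounded {z. \<phi> z \<noteq> 0}"

lemma borel_measurable_continuous_compact_support:
  "continuous_compact_support \<phi> \<Longrightarrow> \<phi> \<in> borel_measurable borel"
  by (simp add: continuous_compact_support_def borel_measurable_continuous_onI)

lemma continuous_compact_supportI:
  fixes \<phi> :: "'a::real_normed_vector \<Rightarrow> 'b::{topological_space,zero}"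
  assumes "continuous_on UNIV \<phi>" and "\<And>z. R \<le> norm z \<Longrightarrow> \<phi> z = 0"
  shows "continuous_compact_support \<phi>"
proof -
  have "{z. \<phi> z \<noteq> 0} \<subseteq> cball 0 R"
  proof
    fix z assume "z \<in> {z. \<phi> z \<noteq> 0}"
    then have "\<not> R \<le> norm z" using assms(2) by auto
    then show "z \<in> cball 0 R" by simp
  qed
  then show ?thesis
    using assms(1) bounded_cball bounded_subset unfolding continuous_compact_support_def by blast
qed

lemma continuous_compact_support_translate:
  fixes \<phi> :: "'a::real_normed_vector \<Rightarrow> 'b::{topological_space,zero}"
  assumes "continuous_compact_support \<phi>"
  shows "continuous_compact_support (\<lambda>z. \<phi> (z - y))"
proof -
  have c: "continuous_on UNIV \<phi>" and b: "bounded {z. \<phi> z \<noteq> 0}"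
    using assms unfolding continuous_compact_support_def by auto
  have "continuous_on UNIV (\<lambda>z. \<phi> (z - y))"
    by (intro continuous_on_compose2[OF c] continuous_intros) auto
  moreover have "{z. \<phi> (z - y) \<noteq> 0} = (\<lambda>z. y + z) ` {z. \<phi> z \<noteq> 0}"
  proof (intro set_eqI iffI)
    fix z assume "z \<in> {z. \<phi> (z - y) \<noteq> 0}"
    then show "z \<in> (\<lambda>z. y + z) ` {z. \<phi> z \<noteq> 0}" by (intro image_eqI[of _ _ "z - y"]) auto
  qed auto
  then have "bounded {z. \<phi> (z - y) \<noteq> 0}"
    using bounded_translation[OF b, of y] by simp
  ultimately show ?thesis
    unfolding continuous_compact_support_def by simp
qed

lemma continuous_compact_support_bounds:
  fixes \<phi> :: "'a::euclidean_space \<Rightarrow> 'b::real_normed_vector"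
  assumes "continuous_compact_support \<phi>"
  obtains R B where "\<And>y. norm (\<phi> y) \<le> B" "\<And>y. R < norm y \<Longrightarrow> \<phi> y = 0"
proof -
  obtain R where R: "\<forall>y\<in>{z. \<phi> z \<noteq> 0}. norm y \<le> R"
    using assms unfolding continuous_compact_support_def bounded_iff by blast
  have "compact (\<phi> ` cball 0 R)"
    using assms unfolding continuous_compact_support_def
    by (intro compact_continuous_image) (auto intro: continuous_on_subset)
  then obtain B where B: "\<forall>x\<in>\<phi> ` cball 0 R. norm x \<le> B"
    using compact_imp_bounded bounded_iff by blast
  have "norm (\<phi> y) \<le> max 0 B" for y
  proof (cases "\<phi> y = 0")
    case False
    with R have "\<phi> y \<in> \<phi> ` cball 0 R" by simp
    with B have "norm (\<phi> y) \<le> B" by blast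
    then show ?thesis by simp
  qed simp
  moreover have "\<phi> y = 0" if "R < norm y" for y
    using R that by force
  ultimately show thesis
    by (rule that)
qed

definition mollifier :: "real \<Rightarrow> ('a::euclidean_space \<Rightarrow> real) \<Rightarrow> bool" where
  "mollifier r u \<longleftrightarrow> continuous_compact_support u \<and> (\<forall>z. 0 \<le> u z) \<and>
     (\<integral>\<^sup>+z. ennreal (u z) \<partial>lborel) = 1 \<and> (\<forall>z. r \<le> norm z \<longrightarrow> u z = 0)"

lemma mollifierD:
  assumes "mollifier r u"
  shows "continuous_compact_support u" "0 \<le> u z" "(\<integral>\<^sup>+z. ennreal (u z) \<partial>lborel) = 1"
    "r \<le> norm z \<Longrightarrow> u z = 0"
  using assms unfolding mollifier_def by auto

lemma borel_measurable_mollifier: "mollifier r u \<Longrightarrow> u \<in> borel_measurable borel"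
  by (simp add: mollifier_def borel_measurable_continuous_compact_support)

lemma nn_integral_tent:
  assumes r: "0 < r"
  shows "0 < (\<integral>\<^sup>+z. ennreal (max 0 (r - norm (z::'a::euclidean_space))) \<partial>lborel)"
    and "(\<integral>\<^sup>+z. ennreal (max 0 (r - norm (z::'a::euclidean_space))) \<partial>lborel) < \<infinity>"
proof -
  have "ennreal (r/2) * indicator (ball 0 (r/2)) z \<le> ennreal (max 0 (r - norm z))" for z :: 'a
  proof -
    have "norm z * 2 < r \<Longrightarrow> norm z \<le> r"
      using norm_ge_zero[of z] by linarith
    then show ?thesis
      by (auto simp: indicator_def max_def intro!: ennreal_leI)
  qed
  then have "(\<integral>\<^sup>+z. ennreal (r/2) * indicator (ball 0 (r/2)) (z::'a) \<partial>lborel)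
      \<le> (\<integral>\<^sup>+z. ennreal (max 0 (r - norm (z::'a))) \<partial>lborel)"
    by (simp add: nn_integral_mono)
  moreover have "0 < (\<integral>\<^sup>+z. ennreal (r/2) * indicator (ball 0 (r/2)) (z::'a) \<partial>lborel)"
    using emeasure_lborel_ball_pos[of "r/2" "0::'a"] r
    by (simp add: nn_integral_cmult_indicator ennreal_zero_less_mult_iff)
  ultimately show "0 < (\<integral>\<^sup>+z. ennreal (max 0 (r - norm (z::'a))) \<partial>lborel)"
    by simp
  have "(\<integral>\<^sup>+z. ennreal (max 0 (r - norm (z::'a))) \<partial>lborel)
      \<le> (\<integral>\<^sup>+z. ennreal r * indicator (cball 0 r) (z::'a) \<partial>lborel)"
    by (rule nn_integral_mono) (auto simp: indicator_def intro!: ennreal_leI)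
  also have "\<dots> < \<infinity>"
    using emeasure_lborel_cball_finite[of "0::'a" r]
    by (simp add: nn_integral_cmult_indicator ennreal_mult_less_top)
  finally show "(\<integral>\<^sup>+z. ennreal (max 0 (r - norm (z::'a))) \<partial>lborel) < \<infinity>" .
qed

lemma mollifier_exists:
  assumes r: "0 < r"
  shows "\<exists>u :: 'a::euclidean_space \<Rightarrow> real. mollifier r u"
proof -
  define v where "v z = max 0 (r - norm z)" for z :: 'a
  have vc: "continuous_on UNIV v"
    unfolding v_def[abs_def] by (intro continuous_intros)
  have [measurable]: "v \<in> borel_measurable borel"
    using vc by (rule borel_measurable_continuous_onI)
  obtain c where c: "(\<integral>\<^sup>+z. ennreal (v z) \<partial>lborel) = ennreal c" "0 < c"
    using nn_integral_tent[OF r, where 'a='a] unfolding v_def[symmetric]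
    by (cases "\<integral>\<^sup>+z. ennreal (v z) \<partial>lborel") auto
  define u where "u z = v z / c" for z
  have "mollifier r u"
    unfolding mollifier_def
  proof (intro conjI allI impI)
    have "continuous_on UNIV u"
      unfolding u_def[abs_def] using vc c(2) by (intro continuous_intros) auto
    then show "continuous_compact_support u"
      by (rule continuous_compact_supportI[of _ r]) (simp add: u_def v_def)
    show "0 \<le> u z" for z
      using c by (simp add: u_def v_def)
    show "u z = 0" if "r \<le> norm z" for z
      using that by (simp add: u_def v_def)
    have "(\<integral>\<^sup>+z. ennreal (u z) \<partial>lborel) = (\<integral>\<^sup>+z. ennreal (1 / c) * ennreal (v z) \<partial>lborel)"
      using c by (intro nn_integral_cong) (simp add: u_def v_def ennreal_mult[symmetric])
    also have "\<dots> = ennreal (1 / c) * ennreal c"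
      using c by (subst nn_integral_cmult) simp_all
    finally show "(\<integral>\<^sup>+z. ennreal (u z) \<partial>lborel) = 1"
      using c by (simp add: ennreal_mult[symmetric])
  qed
  then show ?thesis by blast
qed

lemma mollifier_reflect:
  assumes "mollifier r u"
  shows "(\<integral>\<^sup>+y. ennreal (u (z - y)) \<partial>lborel) = 1" "integrable lborel (\<lambda>y. u (z - y))"
    "(LINT y|lborel. u (z - y)) = 1"
proof -
  note u = mollifierD[OF assms]
  have [measurable]: "u \<in> borel_measurable borel"
    using assms by (rule borel_measurable_mollifier)
  show n: "(\<integral>\<^sup>+y. ennreal (u (z - y)) \<partial>lborel) = 1"
    using nn_integral_lborel_reflect[of "\<lambda>x. ennreal (u x)" z] u(3) by simp
  show "integrable lborel (\<lambda>y. u (z - y))"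
    using n u(2) by (intro integrableI_nonneg) auto
  have "(LINT y|lborel. u (z - y)) = enn2real (\<integral>\<^sup>+y. ennreal (u (z - y)) \<partial>lborel)"
    using u(2) by (intro integral_eq_nn_integral) auto
  then show "(LINT y|lborel. u (z - y)) = 1"
    using n by simp
qed

lemma nn_integral_smoothing_square_le:
  fixes H :: "'a::euclidean_space \<Rightarrow> ennreal" and u :: "'a \<Rightarrow> real"
  assumes [measurable]: "H \<in> borel_measurable borel" "u \<in> borel_measurable borel"
    and u0: "\<And>z. 0 \<le> u z" and u1: "(\<integral>\<^sup>+z. ennreal (u z) \<partial>lborel) = 1"
  shows "(\<integral>\<^sup>+y. (\<integral>\<^sup>+z. H z * u (z - y) \<partial>lborel)\<^sup>2 \<partial>lborel) \<le> (\<integral>\<^sup>+z. (H z)\<^sup>2 \<partial>lborel)"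
proof -
  have pointwise: "(\<integral>\<^sup>+z. H z * u (z - y) \<partial>lborel)\<^sup>2 \<le> (\<integral>\<^sup>+z. (H z)\<^sup>2 * u (z - y) \<partial>lborel)" for y
  proof -
    have sqrt_u: "ennreal (u x) = ennreal (sqrt (u x)) * ennreal (sqrt (u x))" for x
      using u0[of x] by (simp add: ennreal_mult[symmetric])
    have "(\<integral>\<^sup>+z. H z * u (z - y) \<partial>lborel)\<^sup>2
        = (\<integral>\<^sup>+z. (H z * sqrt (u (z - y))) * sqrt (u (z - y)) \<partial>lborel)\<^sup>2"
      by (subst sqrt_u) (simp add: mult.assoc)
    also have "\<dots> \<le> (\<integral>\<^sup>+z. (H z * sqrt (u (z - y)))\<^sup>2 \<partial>lborel) * (\<integral>\<^sup>+z. (ennreal (sqrt (u (z - y))))\<^sup>2 \<partial>lborel)"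
      by (rule Cauchy_Schwarz_nn_integral) measurable
    also have "(\<integral>\<^sup>+z. (ennreal (sqrt (u (z - y))))\<^sup>2 \<partial>lborel) = (\<integral>\<^sup>+z. u (z + - y) \<partial>lborel)"
      using u0 by (intro nn_integral_cong) (simp add: ennreal_power)
    also have "\<dots> = 1"
      using nn_integral_lborel_translate[of "\<lambda>x. ennreal (u x)" "- y"] u1 by simp
    also have "(\<integral>\<^sup>+z. (H z * sqrt (u (z - y)))\<^sup>2 \<partial>lborel) = (\<integral>\<^sup>+z. (H z)\<^sup>2 * u (z - y) \<partial>lborel)"
      by (intro nn_integral_cong) (simp add: power_mult_distrib ennreal_power u0)
    finally show ?thesis by simp
  qed
  have "(\<integral>\<^sup>+y. (\<integral>\<^sup>+z. H z * u (z - y) \<partial>lborel)\<^sup>2 \<partial>lborel)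
      \<le> (\<integral>\<^sup>+y. \<integral>\<^sup>+z. (H z)\<^sup>2 * u (z - y) \<partial>lborel \<partial>lborel)"
    by (intro nn_integral_mono pointwise)
  also have "\<dots> = (\<integral>\<^sup>+z. \<integral>\<^sup>+y. (H z)\<^sup>2 * u (z - y) \<partial>lborel \<partial>lborel)"
    by (rule lborel_pair.Fubini') measurable
  also have "\<dots> = (\<integral>\<^sup>+z. (H z)\<^sup>2 * (\<integral>\<^sup>+y. u (z - y) \<partial>lborel) \<partial>lborel)"
    by (intro nn_integral_cong nn_integral_cmult) measurable
  also have "\<dots> = (\<integral>\<^sup>+z. (H z)\<^sup>2 \<partial>lborel)"
    using nn_integral_lborel_reflect[of "\<lambda>x. ennreal (u x)"] u1 by simp
  finally show ?thesis .
qed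

definition mollify :: "('a::euclidean_space \<Rightarrow> real) \<Rightarrow> ('a \<Rightarrow> complex) \<Rightarrow> 'a \<Rightarrow> complex" where
  "mollify u \<phi> z = (LINT y|lborel. complex_of_real (u (z - y)) * \<phi> y)"

lemma borel_measurable_mollify:
  assumes [measurable]: "u \<in> borel_measurable borel" "\<phi> \<in> borel_measurable borel"
  shows "mollify u \<phi> \<in> borel_measurable borel"
  unfolding mollify_def[abs_def] by measurable

context
  fixes u :: "'a::euclidean_space \<Rightarrow> real" and \<phi> :: "'a \<Rightarrow> complex" and r B :: real
  assumes u: "mollifier r u"
    and \<phi>_meas[measurable]: "\<phi> \<in> borel_measurable borel" and \<phi>_bound: "\<And>y. norm (\<phi> y) \<le> B"
begin

lemma integrable_mollify_integrand:
  "integrable lborel (\<lambda>y. complex_of_real (u (z - y)) * \<phi> y)"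
proof (rule Bochner_Integration.integrable_bound)
  have [measurable]: "u \<in> borel_measurable borel"
    using u by (rule borel_measurable_mollifier)
  show "integrable lborel (\<lambda>y. B * u (z - y))"
    using mollifier_reflect(2)[OF u] by simp
  show "(\<lambda>y. complex_of_real (u (z - y)) * \<phi> y) \<in> borel_measurable lborel"
    by measurable
  show "AE y in lborel. norm (complex_of_real (u (z - y)) * \<phi> y) \<le> norm (B * u (z - y))"
    using mollifierD(2)[OF u] \<phi>_bound order_trans[OF norm_ge_zero \<phi>_bound]
    by (intro AE_I2) (simp add: norm_mult abs_mult mult.commute mult_right_mono)
qed

lemma norm_mollify_le: "norm (mollify u \<phi> z) \<le> B"
proof -
  have "ennreal (norm (mollify u \<phi> z)) \<le> (\<integral>\<^sup>+y. norm (complex_of_real (u (z - y)) * \<phi> y) \<partial>lborel)"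
    unfolding mollify_def by (rule integral_norm_bound_ennreal[OF integrable_mollify_integrand])
  also have "\<dots> \<le> (\<integral>\<^sup>+y. ennreal B * ennreal (u (z - y)) \<partial>lborel)"
    using mollifierD(2)[OF u] \<phi>_bound order_trans[OF norm_ge_zero \<phi>_bound]
    by (intro nn_integral_mono)
      (simp add: norm_mult ennreal_mult[symmetric] mult.commute mult_right_mono ennreal_leI)
  also have "\<dots> = ennreal B * (\<integral>\<^sup>+y. ennreal (u (z - y)) \<partial>lborel)"
    using borel_measurable_mollifier[OF u] by (intro nn_integral_cmult) simp
  finally show ?thesis
    using mollifier_reflect(1)[OF u] order_trans[OF norm_ge_zero \<phi>_bound] by simp
qed

lemma mollify_eq_0:
  assumes \<phi>_supp: "\<And>y. R < norm y \<Longrightarrow> \<phi> y = 0" and z: "R + r < norm z"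
  shows "mollify u \<phi> z = 0"
proof -
  have "complex_of_real (u (z - y)) * \<phi> y = 0" for y
  proof (cases "R < norm y")
    case False
    then have "r \<le> norm (z - y)"
      using z norm_triangle_ineq[of "z - y" y] by simp
    then show ?thesis using mollifierD(4)[OF u] by simp
  qed (simp add: \<phi>_supp)
  then have "(\<lambda>y. complex_of_real (u (z - y)) * \<phi> y) = (\<lambda>y. 0)" ..
  then show ?thesis
    unfolding mollify_def by simp
qed

lemma norm_mollify_diff_le:
  assumes e: "0 \<le> e" and close: "\<And>y. norm (z - y) < r \<Longrightarrow> norm (\<phi> y - \<phi> z) \<le> e"
  shows "norm (mollify u \<phi> z - \<phi> z) \<le> e"
proof -
  note u_props = mollifierD[OF u]
  have [measurable]: "u \<in> borel_measurable borel"
    using u by (rule borel_measurable_mollifier)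
  have "(LINT y|lborel. complex_of_real (u (z - y)) * \<phi> z) = \<phi> z"
    using mollifier_reflect(3)[OF u, of z] by simp
  moreover have "integrable lborel (\<lambda>y. complex_of_real (u (z - y)) * \<phi> z)"
    using mollifier_reflect(2)[OF u, of z] by (intro integrable_mult_left integrable_of_real)
  ultimately have diff_int: "integrable lborel (\<lambda>y. complex_of_real (u (z - y)) * (\<phi> y - \<phi> z))"
    and diff_eq: "mollify u \<phi> z - \<phi> z = (LINT y|lborel. complex_of_real (u (z - y)) * (\<phi> y - \<phi> z))"
    using integrable_mollify_integrand[of z] by (simp_all add: mollify_def algebra_simps)
  have pointwise: "norm (complex_of_real (u (z - y)) * (\<phi> y - \<phi> z)) \<le> e * u (z - y)" for y
  proof (cases "u (z - y) = 0")
    case False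
    then have "norm (\<phi> y - \<phi> z) \<le> e"
      using u_props(4)[of "z - y"] close[of y] by (meson not_le)
    then have "norm (\<phi> y - \<phi> z) * u (z - y) \<le> e * u (z - y)"
      using u_props(2)[of "z - y"] by (rule mult_right_mono)
    then show ?thesis
      using u_props(2)[of "z - y"] by (simp add: norm_mult mult.commute)
  qed simp
  have "ennreal (norm (mollify u \<phi> z - \<phi> z))
      \<le> (\<integral>\<^sup>+y. norm (complex_of_real (u (z - y)) * (\<phi> y - \<phi> z)) \<partial>lborel)"
    unfolding diff_eq by (rule integral_norm_bound_ennreal[OF diff_int])
  also have "\<dots> \<le> (\<integral>\<^sup>+y. ennreal e * ennreal (u (z - y)) \<partial>lborel)"
    using pointwise e u_props(2) by (intro nn_integral_mono) (simp add: ennreal_mult[symmetric] ennreal_leI)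
  also have "\<dots> = ennreal e * (\<integral>\<^sup>+y. ennreal (u (z - y)) \<partial>lborel)"
    by (rule nn_integral_cmult) measurable
  also have "\<dots> = ennreal e"
    using mollifier_reflect(1)[OF u] by simp
  finally show ?thesis
    using e by simp
qed

end

lemma mollify_tendsto:
  fixes U :: "nat \<Rightarrow> 'a::euclidean_space \<Rightarrow> real" and \<phi> :: "'a \<Rightarrow> complex"
  assumes U: "\<And>k. mollifier (r k) (U k)" and r: "r \<longlonglongrightarrow> 0"
    and \<phi>: "continuous_on UNIV \<phi>" and \<phi>_bound: "\<And>y. norm (\<phi> y) \<le> B"
  shows "(\<lambda>k. mollify (U k) \<phi> z) \<longlonglongrightarrow> \<phi> z"
proof (rule tendstoI)
  fix e :: real assume e: "0 < e"
  have \<phi>_meas: "\<phi> \<in> borel_measurable borel"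
    using \<phi> by (rule borel_measurable_continuous_onI)
  obtain d where d: "0 < d" and close: "\<And>y. dist y z < d \<Longrightarrow> dist (\<phi> y) (\<phi> z) < e / 2"
    using \<phi> e unfolding continuous_on_iff by (metis UNIV_I half_gt_zero)
  have "eventually (\<lambda>k. r k < d) sequentially"
    using r d by (rule order_tendstoD)
  then show "eventually (\<lambda>k. dist (mollify (U k) \<phi> z) (\<phi> z) < e) sequentially"
  proof eventually_elim
    case (elim k)
    have "norm (\<phi> y - \<phi> z) \<le> e / 2" if "norm (z - y) < r k" for y
      using close[of y] that elim by (simp add: dist_norm norm_minus_commute)
    then have "norm (mollify (U k) \<phi> z - \<phi> z) \<le> e / 2"
      using e by (intro norm_mollify_diff_le[OF U \<phi>_meas \<phi>_bound]) auto
    then show ?case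
      using e by (simp add: dist_norm)
  qed
qed

lemma norm_mollify_kernel_le:
  fixes G \<phi> :: "'a::euclidean_space \<Rightarrow> complex"
  assumes u: "mollifier r u"
    and \<phi>_bound: "\<And>y. norm (\<phi> y) \<le> B" and \<phi>_supp: "\<And>y. R < norm y \<Longrightarrow> \<phi> y = 0"
  shows "norm (G z * complex_of_real (u (z - y)) * \<phi> y)
    \<le> B * (norm (G z) * indicator (cball 0 (R + r)) z) * u (z - y)"
proof (cases "\<phi> y = 0 \<or> u (z - y) = 0")
  case True
  then show ?thesis
    using order_trans[OF norm_ge_zero \<phi>_bound] mollifierD(2)[OF u, of "z - y"] by auto
next
  case False
  then have "norm y \<le> R" "norm (z - y) < r"
    using \<phi>_supp[of y] mollifierD(4)[OF u, of "z - y"] by (meson not_le)+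
  then have "norm z \<le> R + r"
    using norm_triangle_ineq[of "z - y" y] by simp
  moreover have "norm (G z) * (norm (\<phi> y) * u (z - y)) \<le> norm (G z) * (B * u (z - y))"
    using \<phi>_bound[of y] mollifierD(2)[OF u, of "z - y"] by (intro mult_left_mono mult_right_mono) auto
  ultimately show ?thesis
    using mollifierD(2)[OF u, of "z - y"] by (simp add: norm_mult mult_ac)
qed

context
  fixes G \<phi> :: "'a::euclidean_space \<Rightarrow> complex" and u :: "'a \<Rightarrow> real" and r R B :: real
  assumes G_meas[measurable]: "G \<in> borel_measurable borel"
    and G_loc: "\<And>R. integrable lborel (\<lambda>z. norm (G z) * indicator (cball 0 R) z)"
    and u: "mollifier r u"
    and \<phi>_meas[measurable]: "\<phi> \<in> borel_measurable borel" and \<phi>_bound: "\<And>y. norm (\<phi> y) \<le> B"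
    and \<phi>_supp: "\<And>y. R < norm y \<Longrightarrow> \<phi> y = 0"
begin

lemma integrable_mollify_kernel:
  "integrable (lborel \<Otimes>\<^sub>M lborel) (\<lambda>(y, z). G z * complex_of_real (u (z - y)) * \<phi> y)"
proof (rule integrableI_bounded)
  have [measurable]: "u \<in> borel_measurable borel"
    using u by (rule borel_measurable_mollifier)
  define w where "w z = B * (norm (G z) * indicator (cball 0 (R + r)) z)" for z
  have [measurable]: "w \<in> borel_measurable borel"
    unfolding w_def by measurable
  have w0: "0 \<le> w z" for z
    unfolding w_def using order_trans[OF norm_ge_zero \<phi>_bound] by simp
  have w_int: "integrable lborel w"
    unfolding w_def using G_loc by simp
  have "(\<integral>\<^sup>+x. ennreal (norm (case x of (y, z) \<Rightarrow> G z * complex_of_real (u (z - y)) * \<phi> y)) \<partial>(lborel \<Otimes>\<^sub>M lborel))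
      = (\<integral>\<^sup>+z. \<integral>\<^sup>+y. ennreal (norm (G z * complex_of_real (u (z - y)) * \<phi> y)) \<partial>lborel \<partial>lborel)"
    by (rule lborel_pair.nn_integral_snd[symmetric, where
          f="\<lambda>x. ennreal (norm (case x of (y, z) \<Rightarrow> G z * complex_of_real (u (z - y)) * \<phi> y))", simplified])
      measurable
  also have "\<dots> \<le> (\<integral>\<^sup>+z. \<integral>\<^sup>+y. ennreal (w z) * ennreal (u (z - y)) \<partial>lborel \<partial>lborel)"
    using norm_mollify_kernel_le[OF u \<phi>_bound \<phi>_supp] w0 mollifierD(2)[OF u]
    by (intro nn_integral_mono) (simp add: w_def ennreal_mult[symmetric] ennreal_leI)
  also have "\<dots> = (\<integral>\<^sup>+z. ennreal (w z) * (\<integral>\<^sup>+y. ennreal (u (z - y)) \<partial>lborel) \<partial>lborel)"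
    by (intro nn_integral_cong nn_integral_cmult) measurable
  also have "\<dots> = (\<integral>\<^sup>+z. ennreal (w z) \<partial>lborel)"
    using mollifier_reflect(1)[OF u] by simp
  also have "\<dots> < \<infinity>"
    using w_int w0 by (simp add: integrable_iff_bounded)
  finally show "(\<integral>\<^sup>+x. ennreal (norm (case x of (y, z) \<Rightarrow> G z * complex_of_real (u (z - y)) * \<phi> y))
      \<partial>(lborel \<Otimes>\<^sub>M lborel)) < \<infinity>" .
qed (use borel_measurable_mollifier[OF u] in measurable)

lemma integral_mollify_swap:
  "(LINT y|lborel. (LINT z|lborel. G z * complex_of_real (u (z - y))) * \<phi> y)
    = (LINT z|lborel. G z * mollify u \<phi> z)"
proof -
  have "(LINT y|lborel. (LINT z|lborel. G z * complex_of_real (u (z - y))) * \<phi> y)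
      = (LINT y|lborel. LINT z|lborel. G z * complex_of_real (u (z - y)) * \<phi> y)"
    by simp
  also have "\<dots> = (LINT z|lborel. LINT y|lborel. G z * complex_of_real (u (z - y)) * \<phi> y)"
    using lborel_pair.Fubini_integral[OF integrable_mollify_kernel] by simp
  also have "\<dots> = (LINT z|lborel. G z * mollify u \<phi> z)"
    unfolding mollify_def by (simp add: mult.assoc)
  finally show ?thesis .
qed

end

lemma integral_bounded_support_tendsto:
  fixes g \<psi> :: "'a::euclidean_space \<Rightarrow> complex" and \<psi>s :: "nat \<Rightarrow> 'a \<Rightarrow> complex"
  assumes [measurable]: "g \<in> borel_measurable borel" "\<psi> \<in> borel_measurable borel"
      "\<And>k. \<psi>s k \<in> borel_measurable borel"
    and g_loc: "\<And>R. integrable lborel (\<lambda>z. norm (g z) * indicator (cball 0 R) z)"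
    and bound: "\<And>k z. norm (\<psi>s k z) \<le> B" and supp: "\<And>k z. R < norm z \<Longrightarrow> \<psi>s k z = 0"
    and lim: "AE z in lborel. (\<lambda>k. \<psi>s k z) \<longlonglongrightarrow> \<psi> z"
  shows "(\<lambda>k. LINT z|lborel. g z * \<psi>s k z) \<longlonglongrightarrow> (LINT z|lborel. g z * \<psi> z)"
proof (rule integral_dominated_convergence[where w="\<lambda>z. B * (norm (g z) * indicator (cball 0 R) z)"])
  show "integrable lborel (\<lambda>z. B * (norm (g z) * indicator (cball 0 R) z))"
    using g_loc by simp
  show "AE z in lborel. (\<lambda>k. g z * \<psi>s k z) \<longlonglongrightarrow> g z * \<psi> z"
    using lim by eventually_elim (rule tendsto_mult_left)
  show "AE z in lborel. norm (g z * \<psi>s k z) \<le> B * (norm (g z) * indicator (cball 0 R) z)" for k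
  proof (intro AE_I2)
    fix z
    show "norm (g z * \<psi>s k z) \<le> B * (norm (g z) * indicator (cball 0 R) z)"
    proof (cases "norm z \<le> R")
      case True
      then show ?thesis
        using mult_left_mono[OF bound[of k z], of "norm (g z)"]
        by (simp add: norm_mult indicator_def dist_norm mult_ac)
    qed (simp add: supp)
  qed
qed measurable

lemma norm_integral_mollify_square_le:
  fixes g \<phi> :: "'a::euclidean_space \<Rightarrow> complex"
  assumes g_meas[measurable]: "g \<in> borel_measurable borel"
    and g_loc: "\<And>R. integrable lborel (\<lambda>z. norm (g z) * indicator (cball 0 R) z)"
    and u: "mollifier r u"
    and smooth: "(\<integral>\<^sup>+y. ennreal ((norm (LINT z|lborel. g z * complex_of_real (u (z - y))))\<^sup>2) \<partial>lborel) \<le> C"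
    and \<phi>_meas[measurable]: "\<phi> \<in> borel_measurable borel" and \<phi>_bound: "\<And>y. norm (\<phi> y) \<le> B"
    and \<phi>_supp: "\<And>y. R < norm y \<Longrightarrow> \<phi> y = 0"
  shows "ennreal ((norm (LINT z|lborel. g z * mollify u \<phi> z))\<^sup>2)
    \<le> C * (\<integral>\<^sup>+z. ennreal ((norm (\<phi> z))\<^sup>2) \<partial>lborel)"
proof -
  have [measurable]: "u \<in> borel_measurable borel"
    using u by (rule borel_measurable_mollifier)
  define T where "T y = (LINT z|lborel. g z * complex_of_real (u (z - y)))" for y
  have [measurable]: "T \<in> borel_measurable borel"
    unfolding T_def by measurable
  have "ennreal (norm (LINT y|lborel. T y * \<phi> y))
      \<le> (\<integral>\<^sup>+y. ennreal (norm (T y)) * ennreal (norm (\<phi> y)) \<partial>lborel)"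
  proof (cases "integrable lborel (\<lambda>y. T y * \<phi> y)")
    case True
    then show ?thesis
      using integral_norm_bound_ennreal[OF True] by (simp add: norm_mult ennreal_mult)
  qed (simp add: not_integrable_integral_eq)
  moreover have "(LINT z|lborel. g z * mollify u \<phi> z) = (LINT y|lborel. T y * \<phi> y)"
    unfolding T_def
    by (rule integral_mollify_swap[where R=R, OF g_meas g_loc u \<phi>_meas \<phi>_bound \<phi>_supp, symmetric])
  ultimately have "ennreal ((norm (LINT z|lborel. g z * mollify u \<phi> z))\<^sup>2)
      \<le> (\<integral>\<^sup>+y. ennreal (norm (T y)) * ennreal (norm (\<phi> y)) \<partial>lborel)\<^sup>2"
    by (simp add: ennreal_power[symmetric] power_mono)
  also have "\<dots> \<le> (\<integral>\<^sup>+y. (ennreal (norm (T y)))\<^sup>2 \<partial>lborel) * (\<integral>\<^sup>+y. (ennreal (norm (\<phi> y)))\<^sup>2 \<partial>lborel)"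
    by (rule Cauchy_Schwarz_nn_integral) measurable
  also have "\<dots> \<le> C * (\<integral>\<^sup>+z. ennreal ((norm (\<phi> z))\<^sup>2) \<partial>lborel)"
    using smooth by (simp add: T_def ennreal_power mult_right_mono)
  finally show ?thesis .
qed

lemma continuous_compact_support_dual_bound:
  fixes g \<phi> :: "'a::euclidean_space \<Rightarrow> complex"
  assumes g_meas[measurable]: "g \<in> borel_measurable borel"
    and g_loc: "\<And>R. integrable lborel (\<lambda>z. norm (g z) * indicator (cball 0 R) z)"
    and smooth: "\<And>r u. mollifier r u \<Longrightarrow>
      (\<integral>\<^sup>+y. ennreal ((norm (LINT z|lborel. g z * complex_of_real (u (z - y))))\<^sup>2) \<partial>lborel) \<le> C"
    and \<phi>: "continuous_compact_support \<phi>"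
  shows "ennreal ((norm (LINT z|lborel. g z * \<phi> z))\<^sup>2) \<le> C * (\<integral>\<^sup>+z. ennreal ((norm (\<phi> z))\<^sup>2) \<partial>lborel)"
proof -
  obtain R B where \<phi>_bound: "\<And>y. norm (\<phi> y) \<le> B" and \<phi>_supp: "\<And>y. R < norm y \<Longrightarrow> \<phi> y = 0"
    using continuous_compact_support_bounds[OF \<phi>] by metis
  have \<phi>_meas[measurable]: "\<phi> \<in> borel_measurable borel"
    using \<phi> by (rule borel_measurable_continuous_compact_support)
  obtain U :: "nat \<Rightarrow> 'a \<Rightarrow> real" where U: "\<And>k. mollifier (inverse (Suc k)) (U k)"
    using mollifier_exists[of "inverse (Suc _)"]
    by (metis of_nat_0_less_iff inverse_positive_iff_positive zero_less_Suc)
  have "(\<lambda>k. LINT z|lborel. g z * mollify (U k) \<phi> z) \<longlonglongrightarrow> (LINT z|lborel. g z * \<phi> z)"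
  proof (rule integral_bounded_support_tendsto[OF g_meas \<phi>_meas _ g_loc])
    show "norm (mollify (U k) \<phi> z) \<le> B" for k z
      using norm_mollify_le[OF U \<phi>_meas \<phi>_bound] .
    show "mollify (U k) \<phi> z = 0" if "R + 1 < norm z" for k z
    proof (rule mollify_eq_0[OF U \<phi>_meas \<phi>_bound \<phi>_supp])
      have "inverse (real (Suc k)) \<le> 1"
        by (simp add: inverse_le_1_iff)
      then show "R + inverse (real (Suc k)) < norm z"
        using that by linarith
    qed
    show "AE z in lborel. (\<lambda>k. mollify (U k) \<phi> z) \<longlonglongrightarrow> \<phi> z"
      using U LIMSEQ_inverse_real_of_nat \<phi> \<phi>_bound
      by (intro AE_I2 mollify_tendsto) (auto simp: continuous_compact_support_def)
  qed (intro borel_measurable_mollify borel_measurable_mollifier[OF U] \<phi>_meas)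
  then have "(\<lambda>k. ennreal ((norm (LINT z|lborel. g z * mollify (U k) \<phi> z))\<^sup>2))
      \<longlonglongrightarrow> ennreal ((norm (LINT z|lborel. g z * \<phi> z))\<^sup>2)"
    by (intro tendsto_ennrealI tendsto_power tendsto_norm)
  then show ?thesis
    by (rule LIMSEQ_le_const2)
      (use norm_integral_mollify_square_le[OF g_meas g_loc U smooth[OF U] \<phi>_meas \<phi>_bound \<phi>_supp] in auto)
qed

section \<open>Density of continuous compactly supported functions in \<open>L\<^sup>1\<close>\<close>

lemma emeasure_lborel_outside_cball_small:
  fixes A :: "'a::euclidean_space set"
  assumes A: "A \<in> sets borel" "emeasure lborel A < \<infinity>" and e: "0 < e"
  obtains n :: nat where "emeasure lborel (A - cball 0 (real n)) < e"
proof -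
  define D where "D n = A - cball 0 (real n)" for n :: nat
  have "range D \<subseteq> sets lborel"
    unfolding D_def using A by auto
  moreover have "decseq D"
    unfolding D_def decseq_def by (auto simp: subset_eq dist_norm)
  moreover have "emeasure lborel (D n) \<noteq> \<infinity>" for n
    using emeasure_mono[of "D n" A lborel] A by (auto simp: D_def top_unique less_top[symmetric])
  moreover have "(\<Inter>n. D n) = {}"
    using real_arch_simple by (fastforce simp: D_def dist_norm)
  ultimately have "(\<lambda>n. emeasure lborel (D n)) \<longlonglongrightarrow> 0"
    using Lim_emeasure_decseq[of D lborel] by simp
  then have "eventually (\<lambda>n. emeasure lborel (D n) < e) sequentially"
    using e by (rule order_tendstoD(2))
  then obtain n where "emeasure lborel (D n) < e"
    by (auto simp: eventually_sequentially)
  then show ?thesis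
    using that unfolding D_def by blast
qed

lemma lborel_closed_open_approx:
  fixes A :: "'a::euclidean_space set"
  assumes A[measurable]: "A \<in> sets borel" and A_fin: "emeasure lborel A < \<infinity>" and e: "0 < e"
  obtains F G where "closed F" "open G" "bounded G" "F \<subseteq> A" "F \<subseteq> G"
    "emeasure lborel (G - F) + emeasure lborel (A - G) < ennreal e"
proof -
  obtain n :: nat where n: "emeasure lborel (A - cball 0 (real n)) < ennreal (e / 3)"
    using emeasure_lborel_outside_cball_small[OF A A_fin, of "ennreal (e / 3)"] e by auto
  define A' where "A' = A \<inter> cball 0 (real n)"
  have A'_sets: "A' \<in> sets lebesgue"
    unfolding A'_def using A by auto
  obtain F where F: "closed F" "F \<subseteq> A'" "A' - F \<in> lmeasurable" "emeasure lebesgue (A' - F) < ennreal (e / 3)"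
    using sets_lebesgue_inner_closed[OF A'_sets, of "e / 3"] e by auto
  obtain G where G: "open G" "A' \<subseteq> G" "G - A' \<in> lmeasurable" "emeasure lebesgue (G - A') < ennreal (e / 3)"
    using sets_lebesgue_outer_open[OF A'_sets, of "e / 3"] e by auto
  define G' where "G' = G \<inter> ball 0 (real n + 1)"
  have "A' \<subseteq> G'"
    using G(2) by (auto simp: A'_def G'_def)
  have [measurable]: "G' \<in> sets borel" "F \<in> sets borel"
    using G(1) F(1) by (auto simp: G'_def borel_open borel_closed)
  have "emeasure lborel (G' - F) = emeasure lebesgue (G' - F)"
    by simp
  also have "\<dots> \<le> emeasure lebesgue ((G - A') \<union> (A' - F))"
    by (rule emeasure_mono) (use G F in \<open>auto simp: G'_def\<close>)
  also have "\<dots> \<le> emeasure lebesgue (G - A') + emeasure lebesgue (A' - F)"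
    by (rule emeasure_subadditive) (use G F in auto)
  finally have "emeasure lborel (G' - F) \<le> emeasure lebesgue (G - A') + emeasure lebesgue (A' - F)" .
  moreover have "emeasure lborel (A - G') \<le> emeasure lborel (A - cball 0 (real n))"
    using \<open>A' \<subseteq> G'\<close> by (intro emeasure_mono) (auto simp: A'_def)
  ultimately have "emeasure lborel (G' - F) + emeasure lborel (A - G')
      \<le> emeasure lebesgue (G - A') + emeasure lebesgue (A' - F) + emeasure lborel (A - cball 0 (real n))"
    by (rule add_mono)
  also have "\<dots> < ennreal (e / 3) + ennreal (e / 3) + ennreal (e / 3)"
    using G(4) F(4) n by (intro add_strict_mono)
  also have "\<dots> = ennreal e"
    using e by (simp add: ennreal_plus[symmetric] del: ennreal_plus)
  finally have small: "emeasure lborel (G' - F) + emeasure lborel (A - G') < ennreal e" .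
  have "open G'"
    unfolding G'_def using G(1) by blast
  moreover have "bounded G'"
    unfolding G'_def by (simp add: bounded_Int)
  moreover have "F \<subseteq> A"
    using F(2) by (simp add: A'_def)
  moreover have "F \<subseteq> G'"
    using F(2) \<open>A' \<subseteq> G'\<close> by blast
  ultimately show ?thesis
    by (rule that[OF F(1) _ _ _ _ small])
qed

lemma indicator_continuous_compact_support_approx:
  fixes A :: "'a::euclidean_space set"
  assumes A[measurable]: "A \<in> sets borel" and A_fin: "emeasure lborel A < \<infinity>" and e: "0 < e"
  obtains \<theta> :: "'a \<Rightarrow> real" where "continuous_compact_support \<theta>"
    "(\<integral>\<^sup>+z. ennreal \<bar>\<theta> z - indicator A z\<bar> \<partial>lborel) < ennreal e"
proof -
  obtain F G where F: "closed F" "F \<subseteq> A" and G: "open G" "bounded G" "F \<subseteq> G"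
    and small: "emeasure lborel (G - F) + emeasure lborel (A - G) < ennreal e"
    by (rule lborel_closed_open_approx[OF A A_fin e])
  have [measurable]: "G \<in> sets borel" "F \<in> sets borel"
    using G(1) F(1) by (simp_all add: borel_open borel_closed)
  have "F \<inter> - G = {}"
    using G(3) by blast
  with G(1) obtain \<theta> :: "'a \<Rightarrow> real" where \<theta>: "continuous_on UNIV \<theta>" "\<And>x. \<theta> x \<in> closed_segment 1 0"
    "\<And>x. x \<in> F \<Longrightarrow> \<theta> x = 1" "\<And>x. x \<in> - G \<Longrightarrow> \<theta> x = 0"
    using Urysohn[OF F(1), of "- G" 1 0] by (metis closed_Compl)
  have "{z. \<theta> z \<noteq> 0} \<subseteq> G"
    using \<theta>(4) by auto
  then have \<theta>_cs: "continuous_compact_support \<theta>"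
    unfolding continuous_compact_support_def using \<theta>(1) bounded_subset[OF G(2)] by blast
  have pointwise: "ennreal \<bar>\<theta> z - indicator A z\<bar> \<le> indicator (G - F) z + indicator (A - G) z" for z
  proof -
    have "\<bar>\<theta> z - indicator A z\<bar> \<le> 1"
      using \<theta>(2)[of z] by (auto simp: closed_segment_eq_real_ivl indicator_def)
    then show ?thesis
      using \<theta>(3,4)[of z] F(2) G(3)
      by (cases "z \<in> F"; cases "z \<in> G") (auto simp: indicator_def intro: order_trans[OF ennreal_leI[of _ 1]])
  qed
  have "(\<integral>\<^sup>+z. ennreal \<bar>\<theta> z - indicator A z\<bar> \<partial>lborel)
      \<le> (\<integral>\<^sup>+z. indicator (G - F) z + indicator (A - G) z \<partial>lborel)"
    using pointwise by (simp add: nn_integral_mono)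
  also have "\<dots> = emeasure lborel (G - F) + emeasure lborel (A - G)"
    by (subst nn_integral_add) auto
  also have "\<dots> < ennreal e"
    by (rule small)
  finally show ?thesis
    using \<theta>_cs that by blast
qed

lemma nn_integral_norm_add_le:
  fixes a b :: "'a \<Rightarrow> 'b::real_normed_vector"
  assumes [measurable]: "a \<in> borel_measurable M" "b \<in> borel_measurable M"
  shows "(\<integral>\<^sup>+z. norm (a z + b z) \<partial>M) \<le> (\<integral>\<^sup>+z. norm (a z) \<partial>M) + (\<integral>\<^sup>+z. norm (b z) \<partial>M)"
proof -
  have "(\<integral>\<^sup>+z. norm (a z + b z) \<partial>M) \<le> (\<integral>\<^sup>+z. ennreal (norm (a z)) + ennreal (norm (b z)) \<partial>M)"
    by (intro nn_integral_mono)
      (simp add: ennreal_plus[symmetric] ennreal_leI norm_triangle_ineq del: ennreal_plus)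
  also have "\<dots> = (\<integral>\<^sup>+z. norm (a z) \<partial>M) + (\<integral>\<^sup>+z. norm (b z) \<partial>M)"
    by (rule nn_integral_add) measurable
  finally show ?thesis .
qed

definition L1_approximable :: "('a::euclidean_space \<Rightarrow> complex) \<Rightarrow> bool" where
  "L1_approximable \<psi> \<longleftrightarrow> (\<forall>e>0. \<exists>\<phi>. continuous_compact_support \<phi> \<and>
     (\<integral>\<^sup>+z. ennreal (norm (\<phi> z - \<psi> z)) \<partial>lborel) < ennreal e)"

lemma L1_approximable_indicator_scaleR:
  fixes A :: "'a::euclidean_space set"
  assumes A[measurable]: "A \<in> sets borel" and A_fin: "emeasure lborel A < \<infinity>"
  shows "L1_approximable (\<lambda>z. indicator A z *\<^sub>R c)"
  unfolding L1_approximable_def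
proof (intro allI impI)
  fix e :: real assume e: "0 < e"
  show "\<exists>\<phi>. continuous_compact_support \<phi> \<and>
      (\<integral>\<^sup>+z. ennreal (norm (\<phi> z - indicator A z *\<^sub>R c)) \<partial>lborel) < ennreal e"
  proof (cases "c = 0")
    case True
    then show ?thesis
      using e by (intro exI[of _ "\<lambda>_. 0"]) (simp add: continuous_compact_support_def)
  next
    case False
    then have c: "0 < norm c" by simp
    obtain \<theta> :: "'a \<Rightarrow> real" where \<theta>: "continuous_compact_support \<theta>"
      and \<theta>_close: "(\<integral>\<^sup>+z. ennreal \<bar>\<theta> z - indicator A z\<bar> \<partial>lborel) < ennreal (e / norm c)"
      using indicator_continuous_compact_support_approx[OF A A_fin, of "e / norm c"] e c by auto
    have [measurable]: "\<theta> \<in> borel_measurable borel"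
      using \<theta> by (rule borel_measurable_continuous_compact_support)
    have "continuous_compact_support (\<lambda>z. complex_of_real (\<theta> z) * c)"
      using \<theta> unfolding continuous_compact_support_def
      by (auto intro: continuous_on_mult_right continuous_on_of_real elim: bounded_subset)
    moreover have "(\<integral>\<^sup>+z. ennreal (norm (complex_of_real (\<theta> z) * c - indicator A z *\<^sub>R c)) \<partial>lborel)
        = ennreal (norm c) * (\<integral>\<^sup>+z. ennreal \<bar>\<theta> z - indicator A z\<bar> \<partial>lborel)"
    proof -
      have "norm (complex_of_real (\<theta> z) * c - indicator A z *\<^sub>R c) = norm c * \<bar>\<theta> z - indicator A z\<bar>" for z
      proof -
        have "complex_of_real (\<theta> z) * c - indicator A z *\<^sub>R c = complex_of_real (\<theta> z - indicator A z) * c"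
          by (simp add: scaleR_conv_of_real algebra_simps)
        then show ?thesis
          by (simp only: norm_mult norm_of_real mult.commute)
      qed
      then show ?thesis
        by (subst nn_integral_cmult[symmetric]) (auto simp: ennreal_mult)
    qed
    moreover have "\<dots> < ennreal (norm c) * ennreal (e / norm c)"
      using \<theta>_close c by (intro ennreal_mult_strict_left_mono) auto
    ultimately show ?thesis
      using c e by (intro exI[of _ "\<lambda>z. complex_of_real (\<theta> z) * c"]) (simp add: ennreal_mult[symmetric])
  qed
qed

lemma L1_approximable_add:
  assumes [measurable]: "f \<in> borel_measurable lborel" "g \<in> borel_measurable lborel"
    and "L1_approximable f" "L1_approximable g"
  shows "L1_approximable (\<lambda>z. f z + g z)"
  unfolding L1_approximable_def
proof (intro allI impI)
  fix e :: real assume e: "0 < e"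
  obtain \<phi>1 \<phi>2 where \<phi>: "continuous_compact_support \<phi>1" "continuous_compact_support \<phi>2"
    and close: "(\<integral>\<^sup>+z. ennreal (norm (\<phi>1 z - f z)) \<partial>lborel) < ennreal (e / 2)"
      "(\<integral>\<^sup>+z. ennreal (norm (\<phi>2 z - g z)) \<partial>lborel) < ennreal (e / 2)"
    using assms(3,4) e unfolding L1_approximable_def by (meson half_gt_zero)
  have [measurable]: "\<phi>1 \<in> borel_measurable lborel" "\<phi>2 \<in> borel_measurable lborel"
    using \<phi> by (auto dest: borel_measurable_continuous_compact_support)
  have "continuous_compact_support (\<lambda>z. \<phi>1 z + \<phi>2 z)"
    using \<phi> unfolding continuous_compact_support_def
    by (auto intro: continuous_on_add bounded_subset[of "{z. \<phi>1 z \<noteq> 0} \<union> {z. \<phi>2 z \<noteq> 0}"])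
  moreover have "(\<integral>\<^sup>+z. ennreal (norm ((\<phi>1 z + \<phi>2 z) - (f z + g z))) \<partial>lborel) < ennreal e"
  proof -
    have "(\<integral>\<^sup>+z. ennreal (norm ((\<phi>1 z + \<phi>2 z) - (f z + g z))) \<partial>lborel)
        \<le> (\<integral>\<^sup>+z. norm (\<phi>1 z - f z) \<partial>lborel) + (\<integral>\<^sup>+z. norm (\<phi>2 z - g z) \<partial>lborel)"
      using nn_integral_norm_add_le[of "\<lambda>z. \<phi>1 z - f z" lborel "\<lambda>z. \<phi>2 z - g z"]
      by (simp add: algebra_simps)
    also have "\<dots> < ennreal (e / 2) + ennreal (e / 2)"
      using close by (rule add_strict_mono)
    finally show ?thesis
      using e by (simp add: ennreal_plus[symmetric] del: ennreal_plus)
  qed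
  ultimately show "\<exists>\<phi>. continuous_compact_support \<phi> \<and>
      (\<integral>\<^sup>+z. ennreal (norm (\<phi> z - (f z + g z))) \<partial>lborel) < ennreal e"
    by blast
qed

lemma L1_approximable_limit:
  assumes [measurable]: "f \<in> borel_measurable lborel" "\<And>i. s i \<in> borel_measurable lborel"
    and approx: "\<And>i. L1_approximable (s i)"
    and lim: "(\<lambda>i. \<integral>\<^sup>+z. ennreal (norm (f z - s i z)) \<partial>lborel) \<longlonglongrightarrow> 0"
  shows "L1_approximable f"
  unfolding L1_approximable_def
proof (intro allI impI)
  fix e :: real assume e: "0 < e"
  have "eventually (\<lambda>i. (\<integral>\<^sup>+z. ennreal (norm (f z - s i z)) \<partial>lborel) < ennreal (e / 2)) sequentially"
    using lim e by (intro order_tendstoD(2)) auto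
  then obtain i where i: "(\<integral>\<^sup>+z. ennreal (norm (f z - s i z)) \<partial>lborel) < ennreal (e / 2)"
    by (auto simp: eventually_sequentially)
  obtain \<phi> where \<phi>: "continuous_compact_support \<phi>"
    and close: "(\<integral>\<^sup>+z. ennreal (norm (\<phi> z - s i z)) \<partial>lborel) < ennreal (e / 2)"
    using approx[of i] e unfolding L1_approximable_def by (meson half_gt_zero)
  have [measurable]: "\<phi> \<in> borel_measurable lborel"
    using \<phi> by (auto dest: borel_measurable_continuous_compact_support)
  have "(\<integral>\<^sup>+z. ennreal (norm (\<phi> z - f z)) \<partial>lborel)
      \<le> (\<integral>\<^sup>+z. norm (\<phi> z - s i z) \<partial>lborel) + (\<integral>\<^sup>+z. norm (s i z - f z) \<partial>lborel)"
    using nn_integral_norm_add_le[of "\<lambda>z. \<phi> z - s i z" lborel "\<lambda>z. s i z - f z"] by simp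
  also have "\<dots> < ennreal (e / 2) + ennreal (e / 2)"
    using close i by (intro add_strict_mono) (simp_all add: norm_minus_commute)
  finally show "\<exists>\<phi>. continuous_compact_support \<phi> \<and> (\<integral>\<^sup>+z. ennreal (norm (\<phi> z - f z)) \<partial>lborel) < ennreal e"
    using \<phi> e by (auto simp: ennreal_plus[symmetric] simp del: ennreal_plus)
qed

lemma L1_approximable_integrable:
  fixes \<psi> :: "'a::euclidean_space \<Rightarrow> complex"
  assumes "integrable lborel \<psi>"
  shows "L1_approximable \<psi>"
  using assms
proof (induct rule: integrable_induct)
  case (base A c)
  then show ?case
    by (intro L1_approximable_indicator_scaleR) auto
next
  case (add f g)
  then show ?case
    by (intro L1_approximable_add) (auto intro: borel_measurable_integrable)
next
  case (lim f s)
  show ?case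
  proof (rule L1_approximable_limit[OF _ _ lim(2)])
    show "(\<lambda>i. \<integral>\<^sup>+z. ennreal (norm (f z - s i z)) \<partial>lborel) \<longlonglongrightarrow> 0"
    proof (rule nn_integral_dominated_convergence_norm[where w="\<lambda>z. 2 * norm (f z)"])
      have "(\<integral>\<^sup>+z. ennreal (2 * norm (f z)) \<partial>lborel) = 2 * (\<integral>\<^sup>+z. ennreal (norm (f z)) \<partial>lborel)"
        using lim(5) by (simp add: ennreal_mult nn_integral_cmult)
      then show "(\<integral>\<^sup>+z. ennreal (2 * norm (f z)) \<partial>lborel) < \<infinity>"
        using lim(5) by (simp add: integrable_iff_bounded ennreal_mult_less_top)
    qed (use lim in \<open>auto intro: borel_measurable_integrable\<close>)
  qed (use lim in \<open>auto intro: borel_measurable_integrable\<close>)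
qed

section \<open>An \<open>L\<^sup>2\<close> bound from bounds on all mollifications\<close>

definition cutoff :: "real \<Rightarrow> 'a::real_normed_vector \<Rightarrow> real" where
  "cutoff R z = max 0 (min 1 (R + 1 - norm z))"

lemma cutoff_bounds: "0 \<le> cutoff R z" "cutoff R z \<le> 1"
  "norm z \<le> R \<Longrightarrow> cutoff R z = 1" "R + 1 \<le> norm z \<Longrightarrow> cutoff R z = 0"
  unfolding cutoff_def by auto

lemma continuous_on_cutoff: "continuous_on UNIV (cutoff R)"
  unfolding cutoff_def[abs_def] by (intro continuous_intros)

lemma continuous_compact_support_cutoff_mult:
  fixes a :: "'a::real_normed_vector \<Rightarrow> 'b::real_normed_algebra_1"
  assumes "continuous_on UNIV a"
  shows "continuous_compact_support (\<lambda>z. of_real (cutoff R z) * a z)"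
  using assms continuous_on_cutoff[of R]
  by (intro continuous_compact_supportI[of _ "R + 1"] continuous_intros) (simp_all add: cutoff_bounds(4))

lemma integrable_bounded_support:
  fixes \<psi> :: "'a::euclidean_space \<Rightarrow> 'b::{banach, second_countable_topology}"
  assumes [measurable]: "\<psi> \<in> borel_measurable borel"
    and bound: "\<And>z. norm (\<psi> z) \<le> N" and supp: "\<And>z. R < norm z \<Longrightarrow> \<psi> z = 0"
  shows "integrable lborel \<psi>"
proof (rule Bochner_Integration.integrable_bound)
  show "integrable lborel (\<lambda>z::'a. N * indicator (cball 0 R) z :: real)"
    using emeasure_lborel_cball_finite[of "0::'a" R]
    by (intro integrable_mult_right integrable_real_indicator) auto
  have "norm (\<psi> z) \<le> norm (N * indicator (cball 0 R) z :: real)" for z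
  proof (cases "norm z \<le> R")
    case True
    then show ?thesis
      using bound[of z] order_trans[OF norm_ge_zero bound] by (simp add: indicator_def)
  qed (simp add: supp)
  then show "AE z in lborel. norm (\<psi> z) \<le> norm (N * indicator (cball 0 R) z :: real)"
    by simp
qed simp

lemma continuous_compact_support_AE_approx:
  fixes \<psi> :: "'a::euclidean_space \<Rightarrow> complex"
  assumes "integrable lborel \<psi>"
  obtains a where "\<And>n. continuous_compact_support (a n)" "AE z in lborel. (\<lambda>n. a n z) \<longlonglongrightarrow> \<psi> z"
proof -
  have [measurable]: "\<psi> \<in> borel_measurable borel"
    using assms by (simp add: borel_measurable_integrable)
  have "\<forall>n. \<exists>\<phi>. continuous_compact_support \<phi> \<and>
      (\<integral>\<^sup>+z. ennreal (norm (\<phi> z - \<psi> z)) \<partial>lborel) < ennreal (inverse (real (Suc n)))"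
    using L1_approximable_integrable[OF assms] unfolding L1_approximable_def by simp
  then obtain a where a: "\<And>n. continuous_compact_support (a n)"
    and close: "\<And>n. (\<integral>\<^sup>+z. ennreal (norm (a n z - \<psi> z)) \<partial>lborel) < ennreal (inverse (real (Suc n)))"
    by metis
  have [measurable]: "a n \<in> borel_measurable borel" for n
    using a by (rule borel_measurable_continuous_compact_support)
  define d where "d n z = a n z - \<psi> z" for n z
  have [measurable]: "d n \<in> borel_measurable borel" for n
    unfolding d_def by measurable
  have d_int: "integrable lborel (d n)" for n
    using close[of n] by (intro integrableI_bounded) (auto simp: d_def intro: order.strict_trans)
  have "(LINT z|lborel. norm (d n z)) \<le> inverse (real (Suc n))" for n
  proof -
    have "ennreal (LINT z|lborel. norm (d n z)) = (\<integral>\<^sup>+z. ennreal (norm (d n z)) \<partial>lborel)"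
      by (rule nn_integral_eq_integral[symmetric]) (auto intro: d_int)
    also have "\<dots> < ennreal (inverse (real (Suc n)))"
      using close[of n] unfolding d_def .
    finally show ?thesis
      by (simp add: ennreal_less_iff less_imp_le)
  qed
  then have "(\<lambda>n. LINT z|lborel. norm (d n z)) \<longlonglongrightarrow> 0"
    by (intro tendsto_sandwich[OF _ _ tendsto_const LIMSEQ_inverse_real_of_nat]) auto
  then obtain r :: "nat \<Rightarrow> nat" where "strict_mono r" and r: "AE z in lborel. (\<lambda>n. d (r n) z) \<longlonglongrightarrow> 0"
    using tendsto_L1_AE_subseq[of lborel d] d_int by blast
  from r have "AE z in lborel. (\<lambda>n. a (r n) z) \<longlonglongrightarrow> \<psi> z"
    by eventually_elim (simp add: d_def LIM_zero_iff)
  with a show ?thesis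
    using that[of "\<lambda>n. a (r n)"] by blast
qed

lemma continuous_on_clamp: "continuous_on UNIV (clamp a (b::'a::euclidean_space))"
  using clamp_continuous_on[OF continuous_on_id] by simp

lemma norm_clamp_complex_le:
  assumes "0 \<le> N"
  shows "norm (clamp (- Complex N N) (Complex N N) w) \<le> 2 * N"
proof -
  have "clamp (- Complex N N) (Complex N N) w \<in> cbox (- Complex N N) (Complex N N)"
    using assms by (intro clamp_in_interval) (auto simp: Basis_complex_def)
  then have "\<bar>Re (clamp (- Complex N N) (Complex N N) w)\<bar> \<le> N"
    and "\<bar>Im (clamp (- Complex N N) (Complex N N) w)\<bar> \<le> N"
    by (auto simp: mem_box Basis_complex_def)
  then show ?thesis
    using cmod_le[of "clamp (- Complex N N) (Complex N N) w"] by linarith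
qed

lemma clamp_complex_eq: "norm w \<le> N \<Longrightarrow> clamp (- Complex N N) (Complex N N) w = w"
  using abs_Re_le_cmod[of w] abs_Im_le_cmod[of w]
  by (intro clamp_cancel_cbox) (auto simp: mem_box Basis_complex_def)

lemma bounded_support_approx:
  fixes \<psi> :: "'a::euclidean_space \<Rightarrow> complex"
  assumes [measurable]: "\<psi> \<in> borel_measurable borel"
    and bound: "\<And>z. norm (\<psi> z) \<le> N" and supp: "\<And>z. R < norm z \<Longrightarrow> \<psi> z = 0"
  obtains \<phi> :: "nat \<Rightarrow> 'a \<Rightarrow> complex" where "\<And>n. continuous_compact_support (\<phi> n)"
    "\<And>n z. norm (\<phi> n z) \<le> 2 * N" "\<And>n z. R + 1 < norm z \<Longrightarrow> \<phi> n z = 0"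
    "AE z in lborel. (\<lambda>n. \<phi> n z) \<longlonglongrightarrow> \<psi> z"
proof -
  have N: "0 \<le> N"
    using order_trans[OF norm_ge_zero bound] .
  have "integrable lborel \<psi>"
    using bound supp by (intro integrable_bounded_support[of \<psi> N R]) auto
  then obtain a where a: "\<And>n. continuous_compact_support (a n)"
    and a_lim: "AE z in lborel. (\<lambda>n. a n z) \<longlonglongrightarrow> \<psi> z"
    by (metis continuous_compact_support_AE_approx)
  let ?clamp = "clamp (- Complex N N) (Complex N N)"
  note clamp_cont = continuous_on_clamp[of "- Complex N N" "Complex N N"]
  define \<phi> where "\<phi> n z = complex_of_real (cutoff R z) * ?clamp (a n z)" for n z
  show ?thesis
  proof (rule that[of \<phi>])
    show "continuous_compact_support (\<phi> n)" for n
      using a[of n] unfolding \<phi>_def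
      by (intro continuous_compact_support_cutoff_mult continuous_on_compose2[OF clamp_cont])
        (auto simp: continuous_compact_support_def)
    show "norm (\<phi> n z) \<le> 2 * N" for n z
    proof -
      have "cutoff R z * norm (?clamp (a n z)) \<le> 1 * (2 * N)"
        using cutoff_bounds(1,2)[of R z] norm_clamp_complex_le[OF N] by (intro mult_mono) auto
      then show ?thesis
        using cutoff_bounds(1)[of R z] by (simp add: \<phi>_def norm_mult)
    qed
    show "\<phi> n z = 0" if "R + 1 < norm z" for n z
      using that by (simp add: \<phi>_def cutoff_bounds(4))
    show "AE z in lborel. (\<lambda>n. \<phi> n z) \<longlonglongrightarrow> \<psi> z"
      using a_lim
    proof eventually_elim
      case (elim z)
      have "(\<lambda>n. \<phi> n z) \<longlonglongrightarrow> complex_of_real (cutoff R z) * ?clamp (\<psi> z)"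
        unfolding \<phi>_def using clamp_cont elim
        by (intro tendsto_mult_left isCont_tendsto_compose[of _ ?clamp])
          (simp_all add: continuous_on_eq_continuous_at)
      moreover have "complex_of_real (cutoff R z) * ?clamp (\<psi> z) = \<psi> z"
        using cutoff_bounds(3)[of z R] clamp_complex_eq[OF bound[of z]] supp[of z]
        by (cases "norm z \<le> R") auto
      ultimately show ?case
        by simp
    qed
  qed
qed

lemma nn_integral_norm_square_bounded_support_tendsto:
  fixes \<psi> :: "'a::euclidean_space \<Rightarrow> complex" and \<psi>s :: "nat \<Rightarrow> 'a \<Rightarrow> complex"
  assumes [measurable]: "\<psi> \<in> borel_measurable borel" "\<And>k. \<psi>s k \<in> borel_measurable borel"
    and bound: "\<And>k z. norm (\<psi>s k z) \<le> B" and supp: "\<And>k z. R < norm z \<Longrightarrow> \<psi>s k z = 0"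
    and lim: "AE z in lborel. (\<lambda>k. \<psi>s k z) \<longlonglongrightarrow> \<psi> z"
  shows "(\<lambda>k. \<integral>\<^sup>+z. ennreal ((norm (\<psi>s k z))\<^sup>2) \<partial>lborel) \<longlonglongrightarrow> (\<integral>\<^sup>+z. ennreal ((norm (\<psi> z))\<^sup>2) \<partial>lborel)"
proof (rule nn_integral_dominated_convergence[where w="\<lambda>z. ennreal (B\<^sup>2) * indicator (cball 0 R) z"])
  show "AE z in lborel. ennreal ((norm (\<psi>s k z))\<^sup>2) \<le> ennreal (B\<^sup>2) * indicator (cball 0 R) z" for k
  proof (intro AE_I2)
    fix z
    show "ennreal ((norm (\<psi>s k z))\<^sup>2) \<le> ennreal (B\<^sup>2) * indicator (cball 0 R) z"
    proof (cases "norm z \<le> R")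
      case True
      have "(norm (\<psi>s k z))\<^sup>2 \<le> B\<^sup>2"
        by (rule power_mono[OF bound norm_ge_zero])
      with True show ?thesis
        by (simp add: indicator_def ennreal_leI)
    qed (simp add: supp)
  qed
  show "(\<integral>\<^sup>+z. ennreal (B\<^sup>2) * indicator (cball 0 R) (z::'a) \<partial>lborel) < \<infinity>"
    using emeasure_lborel_cball_finite[of "0::'a" R]
    by (simp add: nn_integral_cmult_indicator ennreal_mult_less_top)
  show "AE z in lborel. (\<lambda>k. ennreal ((norm (\<psi>s k z))\<^sup>2)) \<longlonglongrightarrow> ennreal ((norm (\<psi> z))\<^sup>2)"
    using lim by eventually_elim (intro tendsto_ennrealI tendsto_power tendsto_norm)
qed measurable

lemma bounded_support_dual_bound:
  fixes g \<psi> :: "'a::euclidean_space \<Rightarrow> complex"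
  assumes g_meas[measurable]: "g \<in> borel_measurable borel"
    and g_loc: "\<And>R. integrable lborel (\<lambda>z. norm (g z) * indicator (cball 0 R) z)"
    and C: "C < \<infinity>"
    and dual: "\<And>\<phi>. continuous_compact_support \<phi> \<Longrightarrow>
      ennreal ((norm (LINT z|lborel. g z * \<phi> z))\<^sup>2) \<le> C * (\<integral>\<^sup>+z. ennreal ((norm (\<phi> z))\<^sup>2) \<partial>lborel)"
    and \<psi>_meas[measurable]: "\<psi> \<in> borel_measurable borel"
    and \<psi>_bound: "\<And>z. norm (\<psi> z) \<le> N" and \<psi>_supp: "\<And>z. R < norm z \<Longrightarrow> \<psi> z = 0"
  shows "ennreal ((norm (LINT z|lborel. g z * \<psi> z))\<^sup>2) \<le> C * (\<integral>\<^sup>+z. ennreal ((norm (\<psi> z))\<^sup>2) \<partial>lborel)"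
proof -
  obtain \<phi> :: "nat \<Rightarrow> 'a \<Rightarrow> complex" where \<phi>: "\<And>n. continuous_compact_support (\<phi> n)"
    and \<phi>_bound: "\<And>n z. norm (\<phi> n z) \<le> 2 * N" and \<phi>_supp: "\<And>n z. R + 1 < norm z \<Longrightarrow> \<phi> n z = 0"
    and \<phi>_lim: "AE z in lborel. (\<lambda>n. \<phi> n z) \<longlonglongrightarrow> \<psi> z"
    using bounded_support_approx[of \<psi> N R] \<psi>_bound \<psi>_supp by auto
  have [measurable]: "\<phi> n \<in> borel_measurable borel" for n
    using \<phi> by (rule borel_measurable_continuous_compact_support)
  have "(\<lambda>n. LINT z|lborel. g z * \<phi> n z) \<longlonglongrightarrow> (LINT z|lborel. g z * \<psi> z)"
    by (rule integral_bounded_support_tendsto[OF g_meas \<psi>_meas _ g_loc \<phi>_bound \<phi>_supp \<phi>_lim]) simp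
  then have lim_lhs: "(\<lambda>n. ennreal ((norm (LINT z|lborel. g z * \<phi> n z))\<^sup>2))
      \<longlonglongrightarrow> ennreal ((norm (LINT z|lborel. g z * \<psi> z))\<^sup>2)"
    by (intro tendsto_ennrealI tendsto_power tendsto_norm)
  have "(\<lambda>n. \<integral>\<^sup>+z. ennreal ((norm (\<phi> n z))\<^sup>2) \<partial>lborel) \<longlonglongrightarrow> (\<integral>\<^sup>+z. ennreal ((norm (\<psi> z))\<^sup>2) \<partial>lborel)"
    by (rule nn_integral_norm_square_bounded_support_tendsto[OF \<psi>_meas _ \<phi>_bound \<phi>_supp \<phi>_lim]) simp
  then have lim_rhs: "(\<lambda>n. C * (\<integral>\<^sup>+z. ennreal ((norm (\<phi> n z))\<^sup>2) \<partial>lborel))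
      \<longlonglongrightarrow> C * (\<integral>\<^sup>+z. ennreal ((norm (\<psi> z))\<^sup>2) \<partial>lborel)"
    using C by (intro ennreal_tendsto_cmult) auto
  show ?thesis
    using dual[OF \<phi>] by (intro LIMSEQ_le[OF lim_lhs lim_rhs]) auto
qed

lemma set_nn_integral_norm_square_le_dual:
  fixes g :: "'a::euclidean_space \<Rightarrow> complex"
  assumes [measurable]: "g \<in> borel_measurable borel" "E \<in> sets borel"
    and E: "\<And>z. z \<in> E \<Longrightarrow> norm z \<le> R \<and> norm (g z) \<le> N"
    and dual: "ennreal ((norm (LINT z|lborel. g z * (cnj (g z) * indicator E z)))\<^sup>2)
      \<le> C * (\<integral>\<^sup>+z. ennreal ((norm (cnj (g z) * indicator E z))\<^sup>2) \<partial>lborel)"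
  shows "(\<integral>\<^sup>+z\<in>E. ennreal ((norm (g z))\<^sup>2) \<partial>lborel) \<le> C"
proof -
  define G where "G z = (norm (g z))\<^sup>2 * indicator E z" for z
  have G0: "0 \<le> G z" for z
    by (simp add: G_def)
  have [measurable]: "G \<in> borel_measurable borel"
    unfolding G_def by measurable
  have "integrable lborel G"
  proof (rule integrable_bounded_support[where N="N\<^sup>2" and R=R])
    show "norm (G z) \<le> N\<^sup>2" for z
      using E[of z] by (cases "z \<in> E") (auto simp: G_def intro: power_mono)
    show "G z = 0" if "R < norm z" for z
      using E[of z] that by (auto simp: G_def indicator_def)
  qed simp
  then have G_int: "(\<integral>\<^sup>+z. G z \<partial>lborel) = ennreal (integral\<^sup>L lborel G)"
    using G0 by (intro nn_integral_eq_integral) auto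
  have "g z * (cnj (g z) * indicator E z) = complex_of_real (G z)" for z
  proof -
    have "g z * cnj (g z) = complex_of_real ((norm (g z))\<^sup>2)"
      by (simp only: complex_norm_square)
    then show ?thesis
      by (simp add: G_def mult.assoc[symmetric] indicator_def)
  qed
  then have "(LINT z|lborel. g z * (cnj (g z) * indicator E z)) = complex_of_real (integral\<^sup>L lborel G)"
    by simp
  moreover have "(\<integral>\<^sup>+z. ennreal ((norm (cnj (g z) * indicator E z))\<^sup>2) \<partial>lborel) = ennreal (integral\<^sup>L lborel G)"
    unfolding G_int[symmetric] by (intro nn_integral_cong) (simp add: G_def norm_mult indicator_def)
  ultimately have "ennreal (integral\<^sup>L lborel G) * ennreal (integral\<^sup>L lborel G)
      \<le> ennreal (integral\<^sup>L lborel G) * C"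
    using dual G0 by (simp add: power2_eq_square ennreal_mult mult.commute)
  then have "ennreal (integral\<^sup>L lborel G) \<le> C"
    by (cases "integral\<^sup>L lborel G = 0") (simp_all add: ennreal_mult_le_mult_iff G0)
  then show ?thesis
    using G_int by (simp add: G_def ennreal_mult ennreal_indicator)
qed

lemma borel_measurable_cnj[measurable (raw)]:
  assumes "f \<in> borel_measurable M"
  shows "(\<lambda>x. cnj (f x)) \<in> borel_measurable M"
  using assms by (rule measurable_compose) (intro borel_measurable_continuous_onI continuous_intros)

lemma nn_integral_norm_square_le_dual:
  fixes g :: "'a::euclidean_space \<Rightarrow> complex"
  assumes [measurable]: "g \<in> borel_measurable borel"
    and dual: "\<And>\<psi> N R. \<psi> \<in> borel_measurable borel \<Longrightarrow> (\<And>z. norm (\<psi> z) \<le> N) \<Longrightarrow>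
      (\<And>z. R < norm z \<Longrightarrow> \<psi> z = 0) \<Longrightarrow>
      ennreal ((norm (LINT z|lborel. g z * \<psi> z))\<^sup>2) \<le> C * (\<integral>\<^sup>+z. ennreal ((norm (\<psi> z))\<^sup>2) \<partial>lborel)"
  shows "(\<integral>\<^sup>+z. ennreal ((norm (g z))\<^sup>2) \<partial>lborel) \<le> C"
proof -
  define E where "E n = {z. norm z \<le> real n \<and> norm (g z) \<le> real n}" for n :: nat
  have [measurable]: "E n \<in> sets borel" for n
    unfolding E_def by measurable
  have "(\<integral>\<^sup>+z\<in>E n. ennreal ((norm (g z))\<^sup>2) \<partial>lborel) \<le> C" for n
  proof (rule set_nn_integral_norm_square_le_dual[where R="real n" and N="real n"])
    show "ennreal ((norm (LINT z|lborel. g z * (cnj (g z) * indicator (E n) z)))\<^sup>2)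
      \<le> C * (\<integral>\<^sup>+z. ennreal ((norm (cnj (g z) * indicator (E n) z))\<^sup>2) \<partial>lborel)"
      by (rule dual[where N="real n" and R="real n"]) (auto simp: E_def indicator_def)
  qed (simp_all add: E_def)
  moreover have "incseq (\<lambda>n z. ennreal ((norm (g z))\<^sup>2) * indicator (E n) z)"
    by (intro incseq_SucI le_funI mult_left_mono) (auto simp: E_def indicator_def)
  moreover have "(SUP n. ennreal ((norm (g z))\<^sup>2) * indicator (E n) z) = ennreal ((norm (g z))\<^sup>2)" for z
  proof (rule antisym)
    obtain n :: nat where "max (norm z) (norm (g z)) \<le> real n"
      using real_arch_simple by blast
    then have "ennreal ((norm (g z))\<^sup>2) = ennreal ((norm (g z))\<^sup>2) * indicator (E n) z"
      by (simp add: E_def)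
    then show "ennreal ((norm (g z))\<^sup>2) \<le> (SUP n. ennreal ((norm (g z))\<^sup>2) * indicator (E n) z)"
      by (metis UNIV_I SUP_upper)
  qed (auto intro!: SUP_least simp: indicator_def)
  ultimately show ?thesis
    using nn_integral_monotone_convergence_SUP[of "\<lambda>n z. ennreal ((norm (g z))\<^sup>2) * indicator (E n) z" lborel]
    by (simp add: SUP_least)
qed

lemma nn_integral_norm_square_le_of_mollified_bound:
  fixes g :: "'a::euclidean_space \<Rightarrow> complex"
  assumes g_meas: "g \<in> borel_measurable borel"
    and g_loc: "\<And>R. integrable lborel (\<lambda>z. norm (g z) * indicator (cball 0 R) z)"
    and smooth: "\<And>r u. mollifier r u \<Longrightarrow>
      (\<integral>\<^sup>+y. ennreal ((norm (LINT z|lborel. g z * complex_of_real (u (z - y))))\<^sup>2) \<partial>lborel) \<le> C"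
  shows "(\<integral>\<^sup>+z. ennreal ((norm (g z))\<^sup>2) \<partial>lborel) \<le> C"
proof (cases "C = \<infinity>")
  case False
  then have "C < \<infinity>"
    by (simp add: less_top)
  have dual_Cc: "ennreal ((norm (LINT z|lborel. g z * \<phi> z))\<^sup>2) \<le> C * (\<integral>\<^sup>+z. ennreal ((norm (\<phi> z))\<^sup>2) \<partial>lborel)"
    if "continuous_compact_support \<phi>" for \<phi>
    by (rule continuous_compact_support_dual_bound[OF g_meas g_loc _ that]) (rule smooth)
  show ?thesis
  proof (rule nn_integral_norm_square_le_dual[OF g_meas])
    fix \<psi> :: "'a \<Rightarrow> complex" and N R :: real
    assume \<psi>: "\<psi> \<in> borel_measurable borel" "\<And>z. norm (\<psi> z) \<le> N" "\<And>z. R < norm z \<Longrightarrow> \<psi> z = 0"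
    show "ennreal ((norm (LINT z|lborel. g z * \<psi> z))\<^sup>2) \<le> C * (\<integral>\<^sup>+z. ennreal ((norm (\<psi> z))\<^sup>2) \<partial>lborel)"
      by (rule bounded_support_dual_bound[OF g_meas g_loc \<open>C < \<infinity>\<close>]) (rule dual_Cc \<psi>; assumption)+
  qed
qed simp

section \<open>The measure on the hyperboloid\<close>

lemma borel_measurable_fst_borel[measurable]:
  "fst \<in> borel_measurable (borel :: ('a::topological_space \<times> 'b::topological_space) measure)"
  by (intro borel_measurable_continuous_onI continuous_on_fst continuous_on_id)

lemma borel_measurable_snd_borel[measurable]:
  "snd \<in> borel_measurable (borel :: ('a::topological_space \<times> 'b::topological_space) measure)"
  by (intro borel_measurable_continuous_onI continuous_on_snd continuous_on_id)

lemma hyp_param_measurable[measurable]: "hyp_param \<in> (lborel \<Otimes>\<^sub>M count_space UNIV) \<rightarrow>\<^sub>M borel"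
  unfolding hyp_param_def by measurable

lemma hyp_weight_measurable[measurable]: "hyp_weight \<in> borel_measurable (lborel \<Otimes>\<^sub>M count_space UNIV)"
  unfolding hyp_weight_def by measurable

lemma sets_hyp_mu[measurable_cong, simp]: "sets hyp_mu = sets borel"
  unfolding hyp_mu_def by simp

lemma space_hyp_mu[simp]: "space hyp_mu = UNIV"
  unfolding hyp_mu_def by simp

lemma nn_integral_hyp_mu:
  assumes [measurable]: "F \<in> borel_measurable borel"
  shows "integral\<^sup>N hyp_mu F = (\<integral>\<^sup>+y. hyp_weight (y, True) * F (hyp_param (y, True))
      + hyp_weight (y, False) * F (hyp_param (y, False)) \<partial>lborel)"
proof -
  interpret bool: sigma_finite_measure "count_space (UNIV::bool set)"
    by (rule sigma_finite_measure_count_space_finite) simp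
  have "integral\<^sup>N hyp_mu F = (\<integral>\<^sup>+yb. hyp_weight yb * F (hyp_param yb) \<partial>(lborel \<Otimes>\<^sub>M count_space UNIV))"
    unfolding hyp_mu_def by (simp add: nn_integral_distr nn_integral_density)
  also have "\<dots> = (\<integral>\<^sup>+y. (\<integral>\<^sup>+b. hyp_weight (y, b) * F (hyp_param (y, b)) \<partial>count_space UNIV) \<partial>lborel)"
    by (rule bool.nn_integral_fst[symmetric]) measurable
  also have "\<dots> = (\<integral>\<^sup>+y. hyp_weight (y, True) * F (hyp_param (y, True))
      + hyp_weight (y, False) * F (hyp_param (y, False)) \<partial>lborel)"
    by (simp add: nn_integral_count_space_finite UNIV_bool add.commute)
  finally show ?thesis .
qed

lemma hyp_param_uminus: "- hyp_param (y, b) = hyp_param (- y, \<not> b)"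
  unfolding hyp_param_def by auto

lemma hyp_weight_uminus: "hyp_weight (- y, b) = hyp_weight (y, c)"
  unfolding hyp_weight_def by auto

lemma nn_integral_hyp_mu_reflect:
  assumes [measurable]: "F \<in> borel_measurable borel"
  shows "(\<integral>\<^sup>+p. F (- p) \<partial>hyp_mu) = integral\<^sup>N hyp_mu F"
proof -
  define G where "G y = hyp_weight (y, True) * F (hyp_param (y, True))
    + hyp_weight (y, False) * F (hyp_param (y, False))" for y
  have [measurable]: "G \<in> borel_measurable borel"
    unfolding G_def by measurable
  have "(\<integral>\<^sup>+p. F (- p) \<partial>hyp_mu) = (\<integral>\<^sup>+y. G (0 - y) \<partial>lborel)"
    by (subst nn_integral_hyp_mu, measurable, intro nn_integral_cong)
      (simp add: G_def hyp_param_uminus, metis add.commute hyp_weight_uminus)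
  also have "\<dots> = integral\<^sup>N lborel G"
    by (rule nn_integral_lborel_reflect) simp
  also have "\<dots> = integral\<^sup>N hyp_mu F"
    unfolding G_def by (rule nn_integral_hyp_mu[symmetric]) simp
  finally show ?thesis .
qed

lemma emeasure_hyp_mu_away_from_equator_finite:
  "emeasure hyp_mu {p. norm (fst p) \<le> real n \<and> 1 / Suc n \<le> \<bar>snd p\<bar>} < \<infinity>"
proof -
  define A where "A = {p::pt4. norm (fst p) \<le> real n \<and> 1 / Suc n \<le> \<bar>snd p\<bar>}"
  have [measurable]: "A \<in> sets borel"
    unfolding A_def by measurable
  have weight_le: "hyp_weight (y, b) * indicator A (hyp_param (y, b))
    \<le> ennreal (Suc n) * indicator (cball 0 (real n)) y"
    for y b
  proof (cases "norm y > 1 \<and> hyp_param (y, b) \<in> A")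
    case True
    then have s: "1 / Suc n \<le> sqrt ((norm y)\<^sup>2 - 1)" "norm y \<le> n"
      by (cases b; auto simp: A_def hyp_param_def abs_mult)+
    moreover have "0 < 1 / real (Suc n)" by simp
    ultimately have "0 < sqrt ((norm y)\<^sup>2 - 1)" by linarith
    with s have "1 / sqrt ((norm y)\<^sup>2 - 1) \<le> Suc n"
      by (simp add: field_simps)
    then have "ennreal (1 / sqrt ((norm y)\<^sup>2 - 1)) \<le> ennreal (Suc n)"
      by (rule ennreal_leI)
    then show ?thesis
      using True s by (auto simp: hyp_weight_def indicator_def)
  qed (auto simp: hyp_weight_def indicator_def)
  have "emeasure hyp_mu A = (\<integral>\<^sup>+y. hyp_weight (y, True) * indicator A (hyp_param (y, True))
      + hyp_weight (y, False) * indicator A (hyp_param (y, False)) \<partial>lborel)"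
    using nn_integral_hyp_mu[of "indicator A"] by simp
  also have "\<dots> \<le> (\<integral>\<^sup>+y. ennreal (2 * Suc n) * indicator (cball 0 (real n)) (y::real^3) \<partial>lborel)"
  proof (rule nn_integral_mono)
    fix y :: "real^3"
    show "hyp_weight (y, True) * indicator A (hyp_param (y, True))
        + hyp_weight (y, False) * indicator A (hyp_param (y, False))
        \<le> ennreal (2 * Suc n) * indicator (cball 0 (real n)) y"
      using add_mono[OF weight_le[of y True] weight_le[of y False]]
      by (simp add: distrib_right[symmetric] ennreal_plus[symmetric] del: ennreal_plus)
  qed
  also have "\<dots> < \<infinity>"
    using emeasure_lborel_cball_finite[of "0::real^3" "real n"]
    by (simp add: nn_integral_cmult_indicator ennreal_mult_less_top)
  finally show ?thesis
    unfolding A_def .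
qed

lemma emeasure_hyp_mu_equator: "emeasure hyp_mu {p. snd p = 0} = 0"
proof -
  have [measurable]: "{p::pt4. snd p = 0} \<in> sets borel"
    by measurable
  have vanish: "hyp_weight (y, b) * indicator {p. snd p = 0} (hyp_param (y, b)) = 0" for y b
  proof (cases "norm y > 1")
    case True
    then have "1 < (norm y)\<^sup>2"
      by (metis less_1_mult power2_eq_square)
    then show ?thesis
      by (auto simp: hyp_param_def indicator_def)
  qed (auto simp: hyp_weight_def)
  have "emeasure hyp_mu {p. snd p = 0} = integral\<^sup>N hyp_mu (indicator {p. snd p = 0})"
    by simp
  also have "\<dots> = 0"
    by (subst nn_integral_hyp_mu) (simp_all add: vanish)
  finally show ?thesis .
qed

lemma sigma_finite_hyp_mu: "sigma_finite_measure hyp_mu"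
proof
  define A where "A n = {p::pt4. norm (fst p) \<le> real n \<and> 1 / Suc n \<le> \<bar>snd p\<bar>}" for n
  have [measurable]: "A n \<in> sets borel" "{p::pt4. snd p = 0} \<in> sets borel" for n
    unfolding A_def by measurable
  have cover: "p \<in> {p. snd p = 0} \<union> (\<Union>n. A n)" for p :: pt4
  proof (cases "snd p = 0")
    case False
    obtain n :: nat where n: "norm (fst p) \<le> n" "1 / \<bar>snd p\<bar> \<le> n"
      using real_arch_simple[of "max (norm (fst p)) (1 / \<bar>snd p\<bar>)"] by auto
    have "1 / real (Suc n) \<le> 1 / (1 / \<bar>snd p\<bar>)"
      using n False by (intro divide_left_mono) auto
    then show ?thesis
      using n by (auto simp: A_def)
  qed simp
  have "emeasure hyp_mu (A n) \<noteq> \<infinity>" for n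
    using emeasure_hyp_mu_away_from_equator_finite[of n] by (simp add: A_def)
  then show "\<exists>AA. countable AA \<and> AA \<subseteq> sets hyp_mu \<and> \<Union> AA = space hyp_mu \<and> (\<forall>a\<in>AA. emeasure hyp_mu a \<noteq> \<infinity>)"
    using emeasure_hyp_mu_equator
  proof (intro exI[of _ "insert {p. snd p = 0} (range A)"] conjI)
    show "\<Union> (insert {p. snd p = 0} (range A)) = space hyp_mu"
      unfolding space_hyp_mu using cover by blast
  qed auto
qed

section \<open>Smoothed convolutions for reflection-invariant measures\<close>

lemma (in pair_sigma_finite) nn_integral_pair_swap:
  assumes [measurable]: "G \<in> borel_measurable (M1 \<Otimes>\<^sub>M M2)"
  shows "(\<integral>\<^sup>+x. G (snd x, fst x) \<partial>(M2 \<Otimes>\<^sub>M M1)) = integral\<^sup>N (M1 \<Otimes>\<^sub>M M2) G"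
proof -
  have "integral\<^sup>N (M1 \<Otimes>\<^sub>M M2) G = integral\<^sup>N (distr (M2 \<Otimes>\<^sub>M M1) (M1 \<Otimes>\<^sub>M M2) (\<lambda>(x, y). (y, x))) G"
    using distr_pair_swap by (rule arg_cong)
  also have "\<dots> = (\<integral>\<^sup>+x. G (snd x, fst x) \<partial>(M2 \<Otimes>\<^sub>M M1))"
    by (subst nn_integral_distr) (auto simp: case_prod_beta)
  finally show ?thesis ..
qed

definition autocorr :: "('a::euclidean_space \<Rightarrow> ennreal) \<Rightarrow> 'a \<Rightarrow> ennreal" where
  "autocorr U d = (\<integral>\<^sup>+t. U (d + t) * U t \<partial>lborel)"

lemma borel_measurable_autocorr[measurable]:
  assumes [measurable]: "U \<in> borel_measurable borel"
  shows "autocorr U \<in> borel_measurable borel"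
  unfolding autocorr_def by measurable

text \<open>The pairing of the convolution of the measures \<open>A M\<close> and \<open>B M\<close> with the translate
  \<open>U(\<cdot> - y)\<close>.\<close>
definition smoothed_conv ::
    "'a::euclidean_space measure \<Rightarrow> ('a \<Rightarrow> ennreal) \<Rightarrow> ('a \<Rightarrow> ennreal) \<Rightarrow> ('a \<Rightarrow> ennreal) \<Rightarrow> 'a \<Rightarrow> ennreal" where
  "smoothed_conv M A B U y = (\<integral>\<^sup>+x. A (fst x) * B (snd x) * U (fst x + snd x - y) \<partial>(M \<Otimes>\<^sub>M M))"

locale sigma_finite_borel_measure = sigma_finite_measure M for M :: "'a::euclidean_space measure" +
  assumes sets_eq_borel: "sets M = sets borel"
begin

declare sets_eq_borel[measurable_cong, simp]

sublocale pair: pair_sigma_finite M M ..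

lemma nn_integral_smoothed_conv_square:
  assumes [measurable]: "A \<in> borel_measurable borel" "B \<in> borel_measurable borel" "U \<in> borel_measurable borel"
  shows "(\<integral>\<^sup>+y. (smoothed_conv M A B U y)\<^sup>2 \<partial>lborel) = (\<integral>\<^sup>+p1. \<integral>\<^sup>+p2. \<integral>\<^sup>+p3. \<integral>\<^sup>+p4.
    A p1 * B p2 * A p3 * B p4 * autocorr U (p1 + p2 - p3 - p4) \<partial>M \<partial>M \<partial>M \<partial>M)"
proof -
  let ?M = "M \<Otimes>\<^sub>M M"
  define F where "F y x = A (fst x) * B (snd x) * U (fst x + snd x - y)" for y x
  have [measurable]: "(\<lambda>(y, x). F y x) \<in> borel_measurable (lborel \<Otimes>\<^sub>M ?M)" "F y \<in> borel_measurable ?M" for y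
    unfolding F_def by measurable
  have "(\<integral>\<^sup>+y. (smoothed_conv M A B U y)\<^sup>2 \<partial>lborel) = (\<integral>\<^sup>+y. \<integral>\<^sup>+x. \<integral>\<^sup>+x'. F y x * F y x' \<partial>?M \<partial>?M \<partial>lborel)"
    by (simp add: smoothed_conv_def F_def[symmetric] power2_eq_square nn_integral_cmult nn_integral_multc)
  also have "\<dots> = (\<integral>\<^sup>+x. \<integral>\<^sup>+x'. \<integral>\<^sup>+y. F y x * F y x' \<partial>lborel \<partial>?M \<partial>?M)"
    by (subst pair_sigma_finite.Fubini', unfold_locales, measurable)
      (intro nn_integral_cong pair_sigma_finite.Fubini', unfold_locales, measurable)
  also have "\<dots> = (\<integral>\<^sup>+x. \<integral>\<^sup>+x'. A (fst x) * B (snd x) * A (fst x') * B (snd x')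
      * autocorr U (fst x + snd x - fst x' - snd x') \<partial>?M \<partial>?M)"
  proof (intro nn_integral_cong)
    fix x x' :: "'a \<times> 'a"
    have "(\<integral>\<^sup>+y. F y x * F y x' \<partial>lborel) = A (fst x) * B (snd x) * A (fst x') * B (snd x')
        * (\<integral>\<^sup>+y. U (fst x + snd x - y) * U (fst x' + snd x' - y) \<partial>lborel)"
      by (subst nn_integral_cmult[symmetric]) (simp_all add: F_def mult_ac)
    also have "(\<integral>\<^sup>+y. U (fst x + snd x - y) * U (fst x' + snd x' - y) \<partial>lborel)
        = autocorr U (fst x + snd x - fst x' - snd x')"
      using nn_integral_lborel_reflect[of "\<lambda>t. U (fst x + snd x - fst x' - snd x' + t) * U t"
          "fst x' + snd x'"]
      by (simp add: autocorr_def algebra_simps)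
    finally show "(\<integral>\<^sup>+y. F y x * F y x' \<partial>lborel) = A (fst x) * B (snd x) * A (fst x') * B (snd x')
        * autocorr U (fst x + snd x - fst x' - snd x')" .
  qed
  also have "\<dots> = (\<integral>\<^sup>+p1. \<integral>\<^sup>+p2. \<integral>\<^sup>+p3. \<integral>\<^sup>+p4.
      A p1 * B p2 * A p3 * B p4 * autocorr U (p1 + p2 - p3 - p4) \<partial>M \<partial>M \<partial>M \<partial>M)"
    by (subst nn_integral_fst[symmetric], measurable, intro nn_integral_cong)+
      (subst nn_integral_fst[symmetric], measurable)
  finally show ?thesis .
qed

lemma smoothed_conv_symmetrize_le:
  assumes [measurable]: "A \<in> borel_measurable borel" "A' \<in> borel_measurable borel"
      "B \<in> borel_measurable borel" "U \<in> borel_measurable borel"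
    and le: "\<And>p q. A p * A' q + A q * A' p \<le> 2 * (B p * B q)"
  shows "smoothed_conv M A A' U y \<le> smoothed_conv M B B U y"
proof -
  let ?M = "M \<Otimes>\<^sub>M M"
  have "2 * smoothed_conv M A A' U y
      = (\<integral>\<^sup>+x. A (fst x) * A' (snd x) * U (fst x + snd x - y) \<partial>?M)
        + (\<integral>\<^sup>+x. A (snd x) * A' (fst x) * U (snd x + fst x - y) \<partial>?M)"
    using pair.nn_integral_pair_swap[of "\<lambda>x. A (fst x) * A' (snd x) * U (fst x + snd x - y)"]
    by (simp add: smoothed_conv_def mult_2)
  also have "\<dots> = (\<integral>\<^sup>+x. (A (fst x) * A' (snd x) + A (snd x) * A' (fst x)) * U (fst x + snd x - y) \<partial>?M)"
    by (subst nn_integral_add[symmetric]) (simp_all add: distrib_right add.commute)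
  also have "\<dots> \<le> (\<integral>\<^sup>+x. 2 * (B (fst x) * B (snd x) * U (fst x + snd x - y)) \<partial>?M)"
    using mult_right_mono[OF le, of "U (_ + _ - y)"] by (intro nn_integral_mono) (simp add: mult.assoc)
  also have "\<dots> = 2 * smoothed_conv M B B U y"
    unfolding smoothed_conv_def by (rule nn_integral_cmult) measurable
  finally show ?thesis
    by (subst (asm) ennreal_mult_le_mult_iff) auto
qed

end

locale reflection_invariant_measure = sigma_finite_borel_measure +
  assumes nn_integral_reflect: "\<And>F. F \<in> borel_measurable borel \<Longrightarrow> (\<integral>\<^sup>+p. F (- p) \<partial>M) = integral\<^sup>N M F"
begin

lemma nn_integral_fourfold_reflect:
  assumes [measurable]: "A \<in> borel_measurable borel" "W \<in> borel_measurable borel"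
  shows "(\<integral>\<^sup>+p1. \<integral>\<^sup>+p2. \<integral>\<^sup>+p3. \<integral>\<^sup>+p4. A p1 * A (- p2) * A p3 * A (- p4) * W (p1 + p2 - p3 - p4) \<partial>M \<partial>M \<partial>M \<partial>M)
    = (\<integral>\<^sup>+p1. \<integral>\<^sup>+p2. \<integral>\<^sup>+p3. \<integral>\<^sup>+p4. A p1 * A p2 * A p3 * A p4 * W (p1 + p2 - p3 - p4) \<partial>M \<partial>M \<partial>M \<partial>M)"
proof -
  have "(\<integral>\<^sup>+p1. \<integral>\<^sup>+p2. \<integral>\<^sup>+p3. \<integral>\<^sup>+p4. A p1 * A (- p2) * A p3 * A (- p4) * W (p1 + p2 - p3 - p4) \<partial>M \<partial>M \<partial>M \<partial>M)
    = (\<integral>\<^sup>+p1. \<integral>\<^sup>+p2. \<integral>\<^sup>+p3. \<integral>\<^sup>+p4. A p1 * A p2 * A p3 * A p4 * W (p1 - p2 - p3 + p4) \<partial>M \<partial>M \<partial>M \<partial>M)"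
    using nn_integral_reflect[of "\<lambda>p4. A _ * A (- _) * A _ * A p4 * W (_ + _ - _ + p4)"]
      nn_integral_reflect[of "\<lambda>p2. \<integral>\<^sup>+p3. \<integral>\<^sup>+p4. A _ * A p2 * A p3 * A p4 * W (_ - p2 - p3 + p4) \<partial>M \<partial>M"]
    by simp
  \<comment> \<open>By Fubini, integrate over \<open>p\<^sub>2, p\<^sub>3, p\<^sub>4\<close> in reverse order and rename.\<close>
  also have "\<dots> = (\<integral>\<^sup>+p1. \<integral>\<^sup>+p2. \<integral>\<^sup>+p3. \<integral>\<^sup>+p4. A p1 * A p2 * A p3 * A p4 * W (p1 + p2 - p3 - p4) \<partial>M \<partial>M \<partial>M \<partial>M)"
  proof (rule nn_integral_cong)
    fix p1
    define K where "K a b c = A p1 * A a * A b * A c * W (p1 - a - b + c)" for a b c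
    have [measurable]: "(\<lambda>x. K (fst x) (fst (snd x)) (snd (snd x))) \<in> borel_measurable (M \<Otimes>\<^sub>M (M \<Otimes>\<^sub>M M))"
      unfolding K_def by measurable
    have "(\<integral>\<^sup>+a. \<integral>\<^sup>+b. \<integral>\<^sup>+c. K a b c \<partial>M \<partial>M \<partial>M) = (\<integral>\<^sup>+a. \<integral>\<^sup>+c. \<integral>\<^sup>+b. K a b c \<partial>M \<partial>M \<partial>M)"
      by (intro nn_integral_cong pair.Fubini'[symmetric]) (unfold K_def, measurable)
    also have "\<dots> = (\<integral>\<^sup>+c. \<integral>\<^sup>+a. \<integral>\<^sup>+b. K a b c \<partial>M \<partial>M \<partial>M)"
      by (intro pair.Fubini'[symmetric]) (unfold K_def, measurable)
    also have "\<dots> = (\<integral>\<^sup>+c. \<integral>\<^sup>+b. \<integral>\<^sup>+a. K a b c \<partial>M \<partial>M \<partial>M)"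
      by (intro nn_integral_cong pair.Fubini') (unfold K_def, measurable)
    finally show "(\<integral>\<^sup>+p2. \<integral>\<^sup>+p3. \<integral>\<^sup>+p4. A p1 * A p2 * A p3 * A p4 * W (p1 - p2 - p3 + p4) \<partial>M \<partial>M \<partial>M) =
      (\<integral>\<^sup>+p2. \<integral>\<^sup>+p3. \<integral>\<^sup>+p4. A p1 * A p2 * A p3 * A p4 * W (p1 + p2 - p3 - p4) \<partial>M \<partial>M \<partial>M)"
      unfolding K_def by (simp add: algebra_simps)
  qed
  finally show ?thesis .
qed

lemma nn_integral_smoothed_conv_square_reflect:
  assumes [measurable]: "A \<in> borel_measurable borel" "U \<in> borel_measurable borel"
  shows "(\<integral>\<^sup>+y. (smoothed_conv M A A U y)\<^sup>2 \<partial>lborel) = (\<integral>\<^sup>+y. (smoothed_conv M A (\<lambda>p. A (- p)) U y)\<^sup>2 \<partial>lborel)"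
  by (simp add: nn_integral_smoothed_conv_square nn_integral_fourfold_reflect)

end

interpretation hyp_mu: reflection_invariant_measure hyp_mu
proof -
  interpret sigma_finite_measure hyp_mu
    by (rule sigma_finite_hyp_mu)
  show "reflection_invariant_measure hyp_mu"
    by standard (simp_all add: nn_integral_hyp_mu_reflect)
qed

section \<open>The symmetrisation inequality\<close>

lemma borel_measurable_in_L2_hyp: "in_L2_hyp f \<Longrightarrow> f \<in> borel_measurable borel"
  unfolding in_L2_hyp_def by (simp add: measurable_cong_sets[OF sets_hyp_mu refl])

lemma borel_measurable_conv_density: "is_conv_density F G \<Longrightarrow> G \<in> borel_measurable borel"
  unfolding is_conv_density_def by simp

lemma is_conv_densityD:
  assumes "is_conv_density F G" and "continuous_compact_support \<phi>"
  shows "integrable lborel (\<lambda>z. G z * complex_of_real (\<phi> z))"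
    "integrable (hyp_mu \<Otimes>\<^sub>M hyp_mu) (\<lambda>pq. F (fst pq) * F (snd pq) * complex_of_real (\<phi> (fst pq + snd pq)))"
    "(LINT z|lborel. G z * complex_of_real (\<phi> z))
      = integral\<^sup>L (hyp_mu \<Otimes>\<^sub>M hyp_mu) (\<lambda>pq. F (fst pq) * F (snd pq) * complex_of_real (\<phi> (fst pq + snd pq)))"
  using assms unfolding is_conv_density_def continuous_compact_support_def by blast+

lemma conv_density_locally_integrable:
  assumes "is_conv_density F G"
  shows "integrable lborel (\<lambda>z. norm (G z) * indicator (cball 0 R) z)"
proof (rule Bochner_Integration.integrable_bound)
  have "continuous_compact_support (cutoff R :: pt4 \<Rightarrow> real)"
    using continuous_on_cutoff by (rule continuous_compact_supportI[of _ "R + 1"]) (simp add: cutoff_bounds(4))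
  then show "integrable lborel (\<lambda>z. norm (G z * complex_of_real (cutoff R z)))"
    using is_conv_densityD(1)[OF assms] by (intro integrable_norm) blast
  show "AE z in lborel. norm (norm (G z) * indicator (cball 0 R) z)
    \<le> norm (norm (G z * complex_of_real (cutoff R z)))"
    by (intro AE_I2) (auto simp: indicator_def norm_mult cutoff_bounds)
qed (use borel_measurable_conv_density[OF assms] in measurable)

context
  fixes u :: "pt4 \<Rightarrow> real"
  assumes u: "continuous_compact_support u" and u_nonneg: "\<And>z. 0 \<le> u z"
begin

lemma norm_integral_conv_density_le:
  assumes "is_conv_density F G"
  shows "ennreal (norm (LINT z|lborel. G z * complex_of_real (u (z - y))))
    \<le> smoothed_conv hyp_mu (\<lambda>p. norm (F p)) (\<lambda>p. norm (F p)) u y"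
proof -
  note conv = is_conv_densityD[OF assms continuous_compact_support_translate[OF u, of y]]
  have "ennreal (norm (LINT z|lborel. G z * complex_of_real (u (z - y))))
      \<le> (\<integral>\<^sup>+x. norm (F (fst x) * F (snd x) * complex_of_real (u (fst x + snd x - y))) \<partial>(hyp_mu \<Otimes>\<^sub>M hyp_mu))"
    unfolding conv(3) by (rule integral_norm_bound_ennreal[OF conv(2)])
  also have "\<dots> = smoothed_conv hyp_mu (\<lambda>p. norm (F p)) (\<lambda>p. norm (F p)) u y"
    unfolding smoothed_conv_def by (intro nn_integral_cong) (simp add: norm_mult u_nonneg ennreal_mult)
  finally show ?thesis .
qed

lemma smoothed_conv_le_conv_density:
  assumes "is_conv_density F G" and F_real: "\<And>p. F p = complex_of_real (norm (F p))"
  shows "smoothed_conv hyp_mu (\<lambda>p. norm (F p)) (\<lambda>p. norm (F p)) u y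
    \<le> (\<integral>\<^sup>+z. ennreal (norm (G z)) * u (z - y) \<partial>lborel)"
proof -
  let ?M = "hyp_mu \<Otimes>\<^sub>M hyp_mu"
  note conv = is_conv_densityD[OF assms(1) continuous_compact_support_translate[OF u, of y]]
  define K where "K x = norm (F (fst x)) * norm (F (snd x)) * u (fst x + snd x - y)" for x
  have K: "F (fst x) * F (snd x) * complex_of_real (u (fst x + snd x - y)) = complex_of_real (K x)" for x
    by (subst (1 2) F_real) (simp add: K_def)
  have K0: "0 \<le> K x" for x
    by (simp add: K_def u_nonneg)
  have "integrable ?M (\<lambda>x. norm (complex_of_real (K x)))"
    using integrable_norm[OF conv(2)] unfolding K .
  then have K_int: "integrable ?M K"
    by (simp add: K0)
  have "smoothed_conv hyp_mu (\<lambda>p. norm (F p)) (\<lambda>p. norm (F p)) u y = ennreal (integral\<^sup>L ?M K)"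
    unfolding smoothed_conv_def
    by (subst nn_integral_eq_integral[OF K_int, symmetric])
      (auto simp: K_def u_nonneg ennreal_mult intro!: nn_integral_cong)
  also have "integral\<^sup>L ?M K = norm (LINT z|lborel. G z * complex_of_real (u (z - y)))"
  proof -
    have "(LINT z|lborel. G z * complex_of_real (u (z - y))) = complex_of_real (integral\<^sup>L ?M K)"
      unfolding conv(3) K by (rule integral_complex_of_real)
    then show ?thesis
      using integral_nonneg_AE[of K ?M] K0 by simp
  qed
  also have "\<dots> \<le> (\<integral>\<^sup>+z. norm (G z * complex_of_real (u (z - y))) \<partial>lborel)"
    by (rule integral_norm_bound_ennreal[OF conv(1)])
  also have "\<dots> = (\<integral>\<^sup>+z. ennreal (norm (G z)) * u (z - y) \<partial>lborel)"
    by (intro nn_integral_cong) (simp add: norm_mult u_nonneg ennreal_mult)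
  finally show ?thesis .
qed

end

lemma sum_products_le_root_mean_squares:
  fixes x y z w :: real
  shows "x * w + z * y \<le> 2 * (sqrt ((x\<^sup>2 + z\<^sup>2) / 2) * sqrt ((y\<^sup>2 + w\<^sup>2) / 2))"
proof -
  have "2 * (sqrt ((x\<^sup>2 + z\<^sup>2) / 2) * sqrt ((y\<^sup>2 + w\<^sup>2) / 2)) = sqrt ((x\<^sup>2 + z\<^sup>2) * (y\<^sup>2 + w\<^sup>2))"
    by (simp add: real_sqrt_mult[symmetric] real_sqrt_divide)
  moreover have "(x * w + z * y)\<^sup>2 \<le> (x\<^sup>2 + z\<^sup>2) * (y\<^sup>2 + w\<^sup>2)"
    using zero_le_power2[of "x * y - z * w"] by (simp add: power2_eq_square algebra_simps)
  ultimately show ?thesis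
    by (simp add: real_le_rsqrt)
qed

lemma norm_reflect_products_le_f_sharp:
  "ennreal (norm (f p)) * ennreal (norm (f (- q))) + ennreal (norm (f q)) * ennreal (norm (f (- p)))
    \<le> 2 * (ennreal (norm (f_sharp f p)) * ennreal (norm (f_sharp f q)))"
proof -
  have "norm (f p) * norm (f (- q)) + norm (f q) * norm (f (- p))
      \<le> 2 * (norm (f_sharp f p) * norm (f_sharp f q))"
    using sum_products_le_root_mean_squares[where x="norm (f p)" and z="norm (f (- p))"
        and y="norm (f q)" and w="norm (f (- q))"]
    by (simp add: f_sharp_def mult.commute)
  then have "ennreal (norm (f p) * norm (f (- q)) + norm (f q) * norm (f (- p)))
      \<le> ennreal (2 * (norm (f_sharp f p) * norm (f_sharp f q)))"
    by (rule ennreal_leI)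
  then show ?thesis
    by (simp add: ennreal_mult)
qed

lemma mollified_conv_density_L2_le:
  fixes f g h :: "pt4 \<Rightarrow> complex"
  assumes f_meas[measurable]: "f \<in> borel_measurable borel"
    and g: "is_conv_density f g" and h: "is_conv_density (f_sharp f) h" and u: "mollifier r u"
  shows "(\<integral>\<^sup>+y. ennreal ((norm (LINT z|lborel. g z * complex_of_real (u (z - y))))\<^sup>2) \<partial>lborel) \<le> L2sq h"
proof -
  note u_props = mollifierD[OF u]
  have [measurable]: "u \<in> borel_measurable borel" "h \<in> borel_measurable borel"
    using borel_measurable_mollifier[OF u] borel_measurable_conv_density[OF h] by auto
  define A where "A p = ennreal (norm (f p))" for p
  define B where "B p = ennreal (norm (f_sharp f p))" for p
  define U where "U z = ennreal (u z)" for z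
  have [measurable]: "A \<in> borel_measurable borel" "B \<in> borel_measurable borel" "U \<in> borel_measurable borel"
    unfolding A_def[abs_def] B_def[abs_def] U_def[abs_def] f_sharp_def[abs_def] by measurable
  have "(\<integral>\<^sup>+y. ennreal ((norm (LINT z|lborel. g z * complex_of_real (u (z - y))))\<^sup>2) \<partial>lborel)
      \<le> (\<integral>\<^sup>+y. (smoothed_conv hyp_mu A A U y)\<^sup>2 \<partial>lborel)"
    using norm_integral_conv_density_le[OF u_props(1,2) g]
    by (intro nn_integral_mono) (simp add: A_def[abs_def] U_def[abs_def] ennreal_power[symmetric] power_mono)
  also have "\<dots> = (\<integral>\<^sup>+y. (smoothed_conv hyp_mu A (\<lambda>p. A (- p)) U y)\<^sup>2 \<partial>lborel)"
    by (rule hyp_mu.nn_integral_smoothed_conv_square_reflect) measurable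
  also have "\<dots> \<le> (\<integral>\<^sup>+y. (smoothed_conv hyp_mu B B U y)\<^sup>2 \<partial>lborel)"
    by (intro nn_integral_mono power_mono hyp_mu.smoothed_conv_symmetrize_le)
      (simp_all add: A_def B_def norm_reflect_products_le_f_sharp)
  also have "\<dots> \<le> (\<integral>\<^sup>+y. (\<integral>\<^sup>+z. ennreal (norm (h z)) * u (z - y) \<partial>lborel)\<^sup>2 \<partial>lborel)"
    using smoothed_conv_le_conv_density[OF u_props(1,2) h]
    by (intro nn_integral_mono power_mono) (simp_all add: B_def[abs_def] U_def[abs_def] f_sharp_def)
  also have "\<dots> \<le> L2sq h"
    using nn_integral_smoothing_square_le[of "\<lambda>z. ennreal (norm (h z))" u] u_props
    by (simp add: L2sq_def ennreal_power)
  finally show ?thesis .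
qed

theorem lemma2p1:
  fixes f g h :: "pt4 \<Rightarrow> complex"
  assumes "in_L2_hyp f"
    and "is_conv_density f g"
    and "is_conv_density (f_sharp f) h"
  shows "L2sq g \<le> L2sq h"
  unfolding L2sq_def[of g]
proof (rule nn_integral_norm_square_le_of_mollified_bound)
  show "g \<in> borel_measurable borel"
    using assms(2) by (rule borel_measurable_conv_density)
  show "integrable lborel (\<lambda>z. norm (g z) * indicator (cball 0 R) z)" for R
    using assms(2) by (rule conv_density_locally_integrable)
  show "(\<integral>\<^sup>+y. ennreal ((norm (LINT z|lborel. g z * complex_of_real (u (z - y))))\<^sup>2) \<partial>lborel) \<le> L2sq h"
    if "mollifier r u" for r u
    using borel_measurable_in_L2_hyp[OF assms(1)] assms(2,3) that by (rule mollified_conv_density_L2_le)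
qed

end
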